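(* Let $R\in(0,\infty)\setminus\{1\}$, $b_1>0$, $b_2>1$, $b_3>0$, and let $m,\ell,O,F$ be as in the context. Then: (1)(a) If $R<1$, then $\ell(q)>m(q)$ for $q\in(0,1]$, and on $(0,\infty)$, $m$ crosses $\ell$ exactly once, from below, at some point greater than $1$. (b) If $R>1$, then $m(q)>\ell(q)$ for $q\in(0,1]$, and on $(0,\infty)$, $m$ either does not cross $\ell$ at all, or touches $\ell$ exactly once in the open interval $(1,R/(R-1))$, or crosses $\ell$ twice in $(1,R/(R-1))$. (2) If $R>1$, $F(q,n)$ is well defined at $q=R/(R-1)$. (3) For $n>0$ with $(1-R)n<(1-R)\ell(1)$, $F(1,n)$ is well defined and $F(1,n)=\lim_{q\to1}F(q,n)=-\frac{(1-R)(n-m(1))}{\ell(1)-n}$. For $q\le1$ and $R<1$, $\lim_{n\uparrow\ell(q)}F(q,n)=-\infty$ (and $\lim_{n\downarrow\ell(q)}F(q,n)=+\infty$ if $R>1$). For $q>1$ when $R<1$ (and for $1<q<R/(R-1)$ when $R>1$), $F(q,\ell(q)):=\lim_{n\to\ell(q)}F(q,n)=-\frac{1-R}{R(1-q)}\left\{\frac{q[(1-R)q+R]}{[(1-R)q+R]^2+(b_2-1)R^2}-1\right\}$. (4) $F(q,n)=0$ if and only if $n=m(q)$. Moreover: (a) for $R<1$: (i) on $0<q<1$, $F(q,n)<0$ for $m(q)<n<\ell(q)$ and $F(q,n)>0$ for $n<m(q)$ or $n>\ell(q)$; (ii) at $q=1$, $F(1,n)<0$ for $m(1)<n<\ell(1)$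 and $F(1,n)>0$ for $n<m(1)$, while $F(1,n)$ is not well defined for $n\ge\ell(1)$; (iii) on $q>1$, $F(q,n)<0$ for $n>m(q)$ and $F(q,n)>0$ for $n<m(q)$; (b) for $R>1$: (i) on $0<q<1$, $F(q,n)>0$ for $\ell(q)<n<m(q)$ and $F(q,n)<0$ for $n<\ell(q)$ or $n>m(q)$; (ii) at $q=1$, $F(1,n)>0$ for $\ell(1)<n<m(1)$ and $F(1,n)<0$ for $n>m(1)$, while $F(1,n)$ is not well defined for $n\le\ell(1)$; (iii) on $1<q\le R/(R-1)$, $F(q,n)<0$ for $n>m(q)$ and $F(q,n)>0$ for $n<m(q)$; (iv) on $q>R/(R-1)$, $F(q,n)<0$ for $m(q)<n<\ell(q)$ and $F(q,n)>0$ for $n>\ell(q)$ or $n<m(q)$.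
   Context: Define $m(q)=\frac{R(1-R)}{b_1}q^2-\frac{b_3(1-R)}{b_1}q+1$, $\ell(q)=m(q)+\frac{1-R}{b_1}q(1-q)+\frac{(b_2-1)R(1-R)}{b_1}\frac{q}{(1-R)q+R}$, $\varphi(q,n)=b_1(n-1)+(1-R)(b_3-2R)q+(2-b_2)R(1-R)$, $E(q)^2=4R^2(1-R)^2(b_2-1)(1-q)^2$, and $O(q,n)=\frac{(1-R)n}{R(1-q)}-\frac{2(1-R)^2qn/R}{2(1-R)(1-q)[(1-R)q+R]-\varphi(q,n)-\mathrm{sgn}(1-R)\sqrt{\varphi(q,n)^2+E(q)^2}}$. Let $\mathcal{S}=\{q=1\}\cup\{q=\frac{R}{R-1}\}\cup\{n=0\}\cup\{q<1,(1-R)n\ge(1-R)\ell(q)\}\subseteq\{(q,n):q>0,n\ge0\}$. On $(0,\infty)\times[0,\infty)\setminus\mathcal{S}$ define $F(q,n)=O(q,n)/n$, and extend $F$ to $(0,\infty)\times[0,\infty)$ where possible by taking limits. *)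

theory Defs
  imports "HOL-Analysis.Analysis"
begin

definition mfun :: "real \<Rightarrow> real \<Rightarrow> real \<Rightarrow> real \<Rightarrow> real \<Rightarrow> real" where
  "mfun R b1 b2 b3 q = R*(1-R)/b1 * q^2 - b3*(1-R)/b1 * q + 1"

definition ellfun :: "real \<Rightarrow> real \<Rightarrow> real \<Rightarrow> real \<Rightarrow> real \<Rightarrow> real" where
  "ellfun R b1 b2 b3 q = mfun R b1 b2 b3 q + (1-R)/b1 * q * (1-q)
      + (b2-1)*R*(1-R)/b1 * (q / ((1-R)*q + R))"

definition phifun :: "real \<Rightarrow> real \<Rightarrow> real \<Rightarrow> real \<Rightarrow> real \<Rightarrow> real \<Rightarrow> real" where
  "phifun R b1 b2 b3 q n = b1*(n-1) + (1-R)*(b3-2*R)*q + (2-b2)*R*(1-R)"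

definition Esq :: "real \<Rightarrow> real \<Rightarrow> real \<Rightarrow> real \<Rightarrow> real \<Rightarrow> real" where
  "Esq R b1 b2 b3 q = 4*R^2*(1-R)^2*(b2-1)*(1-q)^2"

definition Oden :: "real \<Rightarrow> real \<Rightarrow> real \<Rightarrow> real \<Rightarrow> real \<Rightarrow> real \<Rightarrow> real" where
  "Oden R b1 b2 b3 q n = 2*(1-R)*(1-q)*((1-R)*q + R) - phifun R b1 b2 b3 q n
      - sgn (1-R) * sqrt ((phifun R b1 b2 b3 q n)^2 + Esq R b1 b2 b3 q)"

definition Ofun :: "real \<Rightarrow> real \<Rightarrow> real \<Rightarrow> real \<Rightarrow> real \<Rightarrow> real \<Rightarrow> real" where
  "Ofun R b1 b2 b3 q n = (1-R)*n / (R*(1-q))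
      - (2*(1-R)^2*q*n/R) / Oden R b1 b2 b3 q n"

text \<open>The defining formula F = O/n (a total HOL function; only meaningful where
  its denominators are nonzero).\<close>
definition Fform :: "real \<Rightarrow> real \<Rightarrow> real \<Rightarrow> real \<Rightarrow> real \<Rightarrow> real \<Rightarrow> real" where
  "Fform R b1 b2 b3 q n = Ofun R b1 b2 b3 q n / n"

definition Freg :: "real \<Rightarrow> real \<Rightarrow> real \<Rightarrow> real \<Rightarrow> (real \<times> real) set" where
  "Freg R b1 b2 b3 = {(q,n). q > 0 \<and> n > 0 \<and> q \<noteq> 1 \<and> q \<noteq> R/(R-1)
      \<and> Oden R b1 b2 b3 q n \<noteq> 0}"

definition Fext :: "real \<Rightarrow> real \<Rightarrow> real \<Rightarrow> real \<Rightarrow> real \<Rightarrow> real \<Rightarrow> real" where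
  "Fext R b1 b2 b3 q n =
     (if (q,n) \<in> Freg R b1 b2 b3 then Fform R b1 b2 b3 q n
      else Lim (at (q,n) within Freg R b1 b2 b3) (\<lambda>p. Fform R b1 b2 b3 (fst p) (snd p)))"

definition F_wd :: "real \<Rightarrow> real \<Rightarrow> real \<Rightarrow> real \<Rightarrow> real \<Rightarrow> real \<Rightarrow> bool" where
  "F_wd R b1 b2 b3 q n \<longleftrightarrow> q > 0 \<and> n \<ge> 0 \<and>
     ((q,n) \<in> Freg R b1 b2 b3 \<or>
      (at (q,n) within Freg R b1 b2 b3 \<noteq> bot \<and>
       (\<exists>L. ((\<lambda>p. Fform R b1 b2 b3 (fst p) (snd p)) \<longlongrightarrow> L) (at (q,n) within Freg R b1 b2 b3))))"

end

theory Submission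
  imports Defs
begin

(*
  Write D(q) = (1-R)q + R and let G be the denominator of the second fraction in O, so that O/n
  depends on n only through G. Replacing the square root in G by its negative gives
  conjugates G' of G and W of G - 2(1-R)q(1-q) with the polynomial identities

    G G' = -4 (1-R)(1-q) b1 D (n - l(q)),
    (G - 2(1-R)q(1-q)) W = -4 (1-R) R (1-q)^2 b1 (n - m(q)),

  and because the square root dominates |phi|, the signs of G', W and (where (1-q)D <= 0) of G
  are those of 1-R. Hence F is a negative multiple of n - m(q) where (1-q)D <= 0, and elsewhere
  F = c (n - m(q))/(n - l(q)) with sgn c = sgn ((1-R)D). The relative position of m and l is
  that of the quadratic (1-q)D + (b2-1)R, because l - m = (1-R)q((1-q)D + (b2-1)R)/(b1 D).

  Wherever G does not vanish the formula is continuous, so F is well defined. At q = 1 the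
  factored form G' (n - m)/(W (n - l)) is continuous as long as (1-R)(n - l(1)) < 0; at the
  remaining points of q = 1 and wherever G = 0, some vanishing multiple of F has a non-zero
  limit, so F has no limit there.
*)

section \<open>Sign patterns of quadratics\<close>

lemma sgn_eq_cases:
  fixes a b :: real
  assumes "sgn a = sgn b"
  shows "(a > 0 \<longleftrightarrow> b > 0) \<and> (a = 0 \<longleftrightarrow> b = 0) \<and> (a < 0 \<longleftrightarrow> b < 0)"
  using assms by (auto simp: sgn_if split: if_splits)

lemma quadratic_factor:
  fixes k b c r q :: real
  assumes "k \<noteq> 0" "r^2 = b^2 - 4*k*c"
  shows "k*q^2 + b*q + c = k*(q - (-b - r)/(2*k))*(q - (-b + r)/(2*k))"
proof -
  have "r*r = b*b - 4*k*c" using assms(2) by (simp add: power2_eq_square)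
  then show ?thesis using assms(1) by (simp add: field_simps power2_eq_square) algebra
qed

lemma upward_parabola_factor:
  fixes k b c z :: real
  assumes k: "k > 0" and nonpos: "k*z^2 + b*z + c \<le> 0"
  obtains r1 r2 where "r1 \<le> r2" "\<And>q. k*q^2 + b*q + c = k*(q - r1)*(q - r2)"
proof -
  define \<Delta> where "\<Delta> = b^2 - 4*k*c"
  have square: "k*z^2 + b*z + c = k*(z + b/(2*k))^2 - \<Delta>/(4*k)"
    unfolding \<Delta>_def using k by (simp add: field_simps power2_eq_square)
  have "\<Delta> \<ge> 0"
  proof (rule ccontr)
    assume "\<not> \<Delta> \<ge> 0"
    then have "- \<Delta>/(4*k) > 0" using k by (simp add: divide_neg_pos)
    moreover have "k*(z + b/(2*k))^2 \<ge> 0" using k by simp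
    ultimately show False using nonpos square by linarith
  qed
  define r where "r = sqrt \<Delta>"
  have "r^2 = b^2 - 4*k*c" "r \<ge> 0" using \<open>\<Delta> \<ge> 0\<close> unfolding r_def \<Delta>_def by simp_all
  moreover have "(-b - r)/(2*k) \<le> (-b + r)/(2*k)" using k \<open>r \<ge> 0\<close> by (simp add: divide_right_mono)
  ultimately show ?thesis
    by (intro that[of "(-b - r)/(2*k)" "(-b + r)/(2*k)"]) (use quadratic_factor k in auto)
qed

lemma sign_pattern_of_downward_parabola:
  fixes u v :: "real \<Rightarrow> real" and k b c :: real
  assumes k: "k > 0" and c: "c > 0"
    and sgn_eq: "\<And>q. q > 0 \<Longrightarrow> sgn (u q - v q) = sgn (-k*q^2 + b*q + c)"
  shows "\<exists>q0>0. u q0 = v q0 \<and> (\<forall>q. 0 < q \<and> q < q0 \<longrightarrow> u q > v q) \<and> (\<forall>q. q > q0 \<longrightarrow> u q < v q)"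
proof -
  have "k*0^2 + (-b)*0 + (-c) \<le> 0" using c by simp
  then obtain r1 r2 where "r1 \<le> r2" and factor: "\<And>q. k*q^2 + (-b)*q + (-c) = k*(q - r1)*(q - r2)"
    using upward_parabola_factor[OF k] by blast
  have "k*r1*r2 < 0" using factor[of 0] c by simp
  then have r1: "r1 < 0" and r2: "r2 > 0"
    using k \<open>r1 \<le> r2\<close> by (auto simp: mult_less_0_iff zero_less_mult_iff)
  have expand: "-k*q^2 + b*q + c = (k*(q - r1))*(r2 - q)" for q
    using factor[of q] by (simp add: algebra_simps)
  have sign: "(u q > v q \<longleftrightarrow> q < r2) \<and> (u q = v q \<longleftrightarrow> q = r2) \<and> (u q < v q \<longleftrightarrow> q > r2)" if "q > 0" for q
  proof -
    have "k*(q - r1) > 0" using k r1 that by simp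
    then show ?thesis using sgn_eq_cases[OF sgn_eq[OF that]] unfolding expand
      by (auto simp: zero_less_mult_iff mult_less_0_iff)
  qed
  show ?thesis using r2 sign by (intro exI[of _ r2]) auto
qed

lemma sign_pattern_of_upward_parabola:
  fixes u v :: "real \<Rightarrow> real" and k b c x y :: real
  assumes k: "k > 0" and "x < y"
    and pos_x: "k*x^2 + b*x + c > 0" and pos_y: "k*y^2 + b*y + c > 0"
    and sgn_eq: "\<And>q. x < q \<Longrightarrow> q < y \<Longrightarrow> sgn (u q - v q) = sgn (k*q^2 + b*q + c)"
  shows "(\<forall>q. x < q \<and> q < y \<longrightarrow> u q > v q) \<or>
    (\<exists>q1. x < q1 \<and> q1 < y \<and> u q1 = v q1 \<and> (\<forall>q. x < q \<and> q < y \<and> q \<noteq> q1 \<longrightarrow> u q > v q)) \<or>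
    (\<exists>q1 q2. x < q1 \<and> q1 < q2 \<and> q2 < y \<and> u q1 = v q1 \<and> u q2 = v q2 \<and>
       (\<forall>q. x < q \<and> q < q1 \<longrightarrow> u q > v q) \<and> (\<forall>q. q1 < q \<and> q < q2 \<longrightarrow> u q < v q) \<and>
       (\<forall>q. q2 < q \<and> q < y \<longrightarrow> u q > v q))"
proof (cases "\<forall>q. x < q \<and> q < y \<longrightarrow> k*q^2 + b*q + c > 0")
  case True
  have "u q > v q" if "x < q" "q < y" for q
    using True sgn_eq_cases[OF sgn_eq[OF that]] that by auto
  then show ?thesis by blast
next
  case False
  then obtain z where z: "x < z" "z < y" "k*z^2 + b*z + c \<le> 0" by auto
  obtain r1 r2 where "r1 \<le> r2" and factor: "\<And>q. k*q^2 + b*q + c = k*(q - r1)*(q - r2)"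
    using upward_parabola_factor[OF k z(3)] by blast
  have sign: "(k*q^2 + b*q + c > 0 \<longleftrightarrow> q < r1 \<or> q > r2) \<and>
      (k*q^2 + b*q + c = 0 \<longleftrightarrow> q = r1 \<or> q = r2) \<and>
      (k*q^2 + b*q + c < 0 \<longleftrightarrow> r1 < q \<and> q < r2)" for q
    unfolding factor using k \<open>r1 \<le> r2\<close>
    by (auto simp: zero_less_mult_iff mult_less_0_iff)
  have "r1 \<le> z" "z \<le> r2" using sign[of z] z(3) by (auto simp: not_less[symmetric])
  then have roots: "x < r1" "r2 < y" using sign[of x] sign[of y] pos_x pos_y z by auto
  have uv: "(u q > v q \<longleftrightarrow> q < r1 \<or> q > r2) \<and> (u q = v q \<longleftrightarrow> q = r1 \<or> q = r2) \<and>
      (u q < v q \<longleftrightarrow> r1 < q \<and> q < r2)" if "x < q" "q < y" for q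
    using sgn_eq_cases[OF sgn_eq[OF that]] sign[of q] by auto
  show ?thesis
  proof (cases "r1 = r2")
    case True
    then show ?thesis using roots uv by (intro disjI2 disjI1 exI[of _ r1]) auto
  next
    case False
    then show ?thesis using roots uv \<open>r1 \<le> r2\<close>
      by (intro disjI2 exI[of _ r1] exI[of _ r2]) auto
  qed
qed

lemma mult_sgn_dominant:
  fixes a p r :: real
  assumes "\<bar>p\<bar> \<le> r"
  shows "a * (sgn a * r - p) \<ge> 0"
proof -
  have "r - p \<ge> 0" "r + p \<ge> 0" using assms by linarith+
  then show ?thesis by (cases a "0::real" rule: linorder_cases) (simp_all add: mult_nonpos_nonpos)
qed

lemma mult_sgn_dominant_strict:
  fixes a p r :: real
  assumes "\<bar>p\<bar> < r" "a \<noteq> 0"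
  shows "a * (sgn a * r - p) > 0" "a * (sgn a * r + p) > 0"
proof -
  have "r - p > 0" "r + p > 0" using assms(1) by linarith+
  then show "a * (sgn a * r - p) > 0" "a * (sgn a * r + p) > 0"
    using assms(2) by (cases a "0::real" rule: linorder_cases, simp_all add: mult_neg_neg)
      (cases a "0::real" rule: linorder_cases, simp_all add: mult_neg_neg)
qed

lemma tendsto_diagonal:
  fixes q n :: real
  shows "((\<lambda>t. (q+t, n+t)) \<longlongrightarrow> (q, n)) (at_right 0)"
proof -
  have "((\<lambda>t. (q+t, n+t)) \<longlongrightarrow> (q+0, n+0)) (at_right (0::real))"
    by (intro tendsto_intros)
  then show ?thesis by simp
qed

lemma filterlim_diagonal_at_within:
  fixes q n :: real
  assumes "\<forall>\<^sub>F t in at_right 0. (q+t, n+t) \<in> A"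
  shows "filterlim (\<lambda>t. (q+t, n+t)) (at (q,n) within A) (at_right 0)"
proof (rule filterlim_at_withinI[OF tendsto_diagonal])
  show "\<forall>\<^sub>F t in at_right 0. (q+t, n+t) \<in> A - {(q,n)}"
    using assms eventually_at_right_less[of "0::real"] by eventually_elim auto
qed

lemma at_within_nontrivial_diagonal:
  fixes q n :: real
  assumes "\<forall>\<^sub>F t in at_right 0. (q+t, n+t) \<in> A"
  shows "at (q,n) within A \<noteq> bot"
proof
  assume "at (q,n) within A = bot"
  then have "filtermap (\<lambda>t. (q+t, n+t)) (at_right (0::real)) = bot"
    using filterlim_diagonal_at_within[OF assms] by (simp add: filterlim_def bot_unique)
  then show False by (simp add: filtermap_bot_iff)
qed

lemma limit_of_vanishing_multiple_eq_0:
  fixes f g h :: "'a \<Rightarrow> real"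
  assumes "F \<noteq> bot" "(f \<longlongrightarrow> L) F" "(g \<longlongrightarrow> 0) F"
    and "\<forall>\<^sub>F x in F. g x * f x = h x" "(h \<longlongrightarrow> c) F"
  shows "c = 0"
proof -
  have "((\<lambda>x. g x * f x) \<longlongrightarrow> 0 * L) F" using assms(2,3) by (intro tendsto_mult)
  then have "(h \<longlongrightarrow> 0) F" using assms(4) by (simp add: Lim_transform_eventually)
  then show ?thesis using tendsto_unique[OF assms(1,5)] by simp
qed

lemma eventually_at_right_shift_ne:
  fixes q c :: real
  shows "\<forall>\<^sub>F t in at_right 0. q + t \<noteq> c"
proof (cases "q = c")
  case True
  show ?thesis using eventually_at_right_less[of "0::real"] by eventually_elim (simp add: True)
next
  case False
  have "((\<lambda>t. q + t) \<longlongrightarrow> q) (at_right (0::real))"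
    using tendsto_add[OF tendsto_const tendsto_ident_at, of q 0] by simp
  then show ?thesis using False by (rule tendsto_imp_eventually_ne)
qed

lemma sgn_mult_abs_eq:
  fixes a x :: real
  shows "a * x < 0 \<Longrightarrow> sgn a * \<bar>x\<bar> = - x" "a * x > 0 \<Longrightarrow> sgn a * \<bar>x\<bar> = x"
  by (auto simp: mult_less_0_iff zero_less_mult_iff)

section \<open>The conjugate identities\<close>

locale F_setting =
  fixes R b1 b2 b3 :: real
  assumes R_pos: "R > 0" and R_ne_1: "R \<noteq> 1" and b1_pos: "b1 > 0" and b2_gt_1: "b2 > 1"
begin

abbreviation "m \<equiv> mfun R b1 b2 b3"
abbreviation "l \<equiv> ellfun R b1 b2 b3"
abbreviation "phi \<equiv> phifun R b1 b2 b3"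
abbreviation "G \<equiv> Oden R b1 b2 b3"
abbreviation D :: "real \<Rightarrow> real" where "D q \<equiv> (1-R)*q + R"

definition rad :: "real \<Rightarrow> real \<Rightarrow> real" where
  "rad q n = sqrt ((phi q n)^2 + Esq R b1 b2 b3 q)"

text \<open>The conjugates of \<open>G\<close> and of \<open>G - 2(1-R)q(1-q) = 2(1-R)R(1-q)\<^sup>2 - phi - sgn(1-R) rad\<close>:
  flipping the sign of the square root makes their products with \<open>G\<close> polynomial.\<close>

definition Oden_conj :: "real \<Rightarrow> real \<Rightarrow> real" where
  "Oden_conj q n = 2*(1-R)*(1-q)*D q - phi q n + sgn (1-R) * rad q n"

definition Onum_conj :: "real \<Rightarrow> real \<Rightarrow> real" where
  "Onum_conj q n = 2*(1-R)*R*(1-q)^2 - phi q n + sgn (1-R) * rad q n"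

definition gap_quad :: "real \<Rightarrow> real" where
  "gap_quad q = (1-q)*D q + (b2-1)*R"

text \<open>\<open>b1 D(q) (n - l(q))\<close>, written without the pole of \<open>l\<close> at \<open>D(q) = 0\<close>.\<close>

definition ell_gap :: "real \<Rightarrow> real \<Rightarrow> real" where
  "ell_gap q n = b1*D q*(n - m q) - (1-R)*q*gap_quad q"

definition F_red :: "real \<Rightarrow> real \<Rightarrow> real" where
  "F_red q n = (1-R)/(R*(1-q)) - 2*(1-R)^2*q/(R * G q n)"

lemma phi_eq: "phi q n = b1*(n - m q) + (1-R)*R*((1-q)^2 - (b2-1))"
  using b1_pos unfolding phifun_def mfun_def by (simp add: field_simps power2_eq_square)

lemma Oden_eq: "G q n = 2*(1-R)*(1-q)*D q - phi q n - sgn (1-R) * rad q n"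
  unfolding Oden_def rad_def by simp

lemma abs_phi_le_rad: "\<bar>phi q n\<bar> \<le> rad q n"
proof -
  have "sqrt ((phi q n)^2) \<le> rad q n"
    unfolding rad_def Esq_def using b2_gt_1 by (intro real_sqrt_le_mono) simp
  then show ?thesis by simp
qed

lemma abs_phi_less_rad: "q \<noteq> 1 \<Longrightarrow> \<bar>phi q n\<bar> < rad q n"
proof -
  assume "q \<noteq> 1"
  then have "sqrt ((phi q n)^2) < rad q n"
    unfolding rad_def Esq_def using b2_gt_1 R_pos R_ne_1 by (intro real_sqrt_less_mono) simp
  then show ?thesis by simp
qed

lemma mult_conj_rad:
  "(x - sgn (1-R) * rad q n) * (x + sgn (1-R) * rad q n) = x^2 - (phi q n)^2 - Esq R b1 b2 b3 q"
proof -
  have "(sgn (1-R))^2 = (1::real)" using R_ne_1 by (simp add: sgn_if)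
  moreover have "(rad q n)^2 = (phi q n)^2 + Esq R b1 b2 b3 q"
    unfolding rad_def Esq_def using b2_gt_1 by simp
  ultimately show ?thesis by (simp add: algebra_simps power2_eq_square)
qed

lemma Oden_mult_conj: "G q n * Oden_conj q n = -4*(1-R)*(1-q)*ell_gap q n"
proof -
  have "G q n * Oden_conj q n = (2*(1-R)*(1-q)*D q - phi q n)^2 - (phi q n)^2 - Esq R b1 b2 b3 q"
    unfolding Oden_eq Oden_conj_def mult_conj_rad[symmetric] by (simp add: algebra_simps)
  also have "\<dots> = -4*(1-R)*(1-q)*ell_gap q n"
    unfolding phi_eq Esq_def ell_gap_def gap_quad_def by (simp add: algebra_simps power2_eq_square)
  finally show ?thesis .
qed

lemma Onum_mult_conj:
  "(G q n - 2*(1-R)*q*(1-q)) * Onum_conj q n = -4*(1-R)*R*(1-q)^2*b1*(n - m q)"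
proof -
  have "(G q n - 2*(1-R)*q*(1-q)) * Onum_conj q n
      = (2*(1-R)*R*(1-q)^2 - phi q n)^2 - (phi q n)^2 - Esq R b1 b2 b3 q"
    unfolding Oden_eq Onum_conj_def mult_conj_rad[symmetric] by (simp add: algebra_simps power2_eq_square)
  also have "\<dots> = -4*(1-R)*R*(1-q)^2*b1*(n - m q)"
    unfolding phi_eq Esq_def by (simp add: algebra_simps power2_eq_square)
  finally show ?thesis .
qed

lemma Oden_conj_sign: "(1-q)*D q > 0 \<Longrightarrow> (1-R) * Oden_conj q n > 0"
proof -
  assume "(1-q)*D q > 0"
  then have "2*(1-R)^2*((1-q)*D q) > 0" using R_ne_1 by simp
  moreover have "(1-R) * (sgn (1-R) * rad q n - phi q n) \<ge> 0"
    using mult_sgn_dominant[OF abs_phi_le_rad] .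
  ultimately show ?thesis unfolding Oden_conj_def by (simp add: algebra_simps power2_eq_square)
qed

lemma Oden_sign: "q \<noteq> 1 \<Longrightarrow> (1-q)*D q \<le> 0 \<Longrightarrow> (1-R) * G q n < 0"
proof -
  assume "q \<noteq> 1" "(1-q)*D q \<le> 0"
  then have "2*(1-R)^2*((1-q)*D q) \<le> 0" by (simp add: mult_nonneg_nonpos)
  moreover have "(1-R) * (sgn (1-R) * rad q n + phi q n) > 0"
    using mult_sgn_dominant_strict(2)[OF abs_phi_less_rad] \<open>q \<noteq> 1\<close> R_ne_1 by simp
  ultimately show ?thesis unfolding Oden_eq by (simp add: algebra_simps power2_eq_square)
qed

lemma Onum_conj_sign: "q \<noteq> 1 \<Longrightarrow> (1-R) * Onum_conj q n > 0"
proof -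
  assume "q \<noteq> 1"
  then have "2*(1-R)^2*R*(1-q)^2 \<ge> 0" using R_pos by simp
  moreover have "(1-R) * (sgn (1-R) * rad q n - phi q n) > 0"
    using mult_sgn_dominant_strict(1)[OF abs_phi_less_rad] \<open>q \<noteq> 1\<close> R_ne_1 by simp
  ultimately show ?thesis unfolding Onum_conj_def by (simp add: algebra_simps power2_eq_square)
qed

section \<open>Relative position of \<open>m\<close> and \<open>l\<close>\<close>

lemma pole_gt_1: "R > 1 \<Longrightarrow> R/(R-1) > 1"
  by (simp add: field_simps)

lemma D_pos:
  assumes "0 \<le> q" "q \<le> 1"
  shows "D q > 0"
proof (cases "q = 0")
  case True
  then show ?thesis using R_pos by simp
next
  case False
  have "R*(1-q) \<ge> 0" using assms R_pos by simp
  moreover have "D q = q + R*(1-q)" by (simp add: algebra_simps)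
  ultimately show ?thesis using False assms by linarith
qed

lemma D_pos_if_R_lt_1: "R < 1 \<Longrightarrow> q \<ge> 0 \<Longrightarrow> D q > 0"
  using R_pos mult_nonneg_nonneg[of "1-R" q] by linarith

lemma D_sign_if_R_gt_1:
  assumes "R > 1"
  shows "D q > 0 \<longleftrightarrow> q < R/(R-1)" "D q < 0 \<longleftrightarrow> q > R/(R-1)"
  using assms by (simp_all add: field_simps)

lemma gap_quad_eq: "gap_quad q = -(1-R)*q^2 + (1-2*R)*q + R*b2"
  unfolding gap_quad_def by (simp add: algebra_simps power2_eq_square)

lemma gap_quad_pos: "(1-q)*D q \<ge> 0 \<Longrightarrow> gap_quad q > 0"
  unfolding gap_quad_def using b2_gt_1 R_pos mult_pos_pos[of "b2-1" R] by linarith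

lemma ell_minus_m:
  assumes "D q \<noteq> 0"
  shows "l q - m q = (1-R)*q*gap_quad q/(b1*D q)"
proof -
  define d where "d = D q"
  have "d \<noteq> 0" using assms d_def by simp
  have "l q - m q = (1-R)/b1 * q * (1-q) + (b2-1)*R*(1-R)/b1 * (q / d)"
    unfolding ellfun_def d_def by simp
  also have "\<dots> = (1-R)*q*((1-q)*d + (b2-1)*R)/(b1*d)"
    using \<open>d \<noteq> 0\<close> b1_pos by (simp add: field_simps)
  finally show ?thesis unfolding d_def gap_quad_def .
qed

lemma ell_gap_eq:
  assumes "D q \<noteq> 0"
  shows "ell_gap q n = b1*D q*(n - l q)"
proof -
  define d where "d = D q"
  have "d \<noteq> 0" using assms d_def by simp
  have "l q = m q + (1-R)*q*gap_quad q/(b1*d)" using ell_minus_m[OF assms] d_def by simp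
  then show ?thesis
    unfolding ell_gap_def d_def[symmetric] using \<open>d \<noteq> 0\<close> b1_pos by (simp add: field_simps)
qed

lemma ell_1: "l 1 = m 1 + (1-R)*(b2-1)*R/b1"
  unfolding ellfun_def by simp

lemma sgn_ell_minus_m:
  assumes "q > 0" "D q > 0"
  shows "sgn ((1-R)*(l q - m q)) = sgn (gap_quad q)"
proof -
  define c where "c = (1-R)^2*q/(b1*D q)"
  have "(1-R)*(l q - m q) = c * gap_quad q"
    unfolding c_def using ell_minus_m[of q] assms by (simp add: power2_eq_square)
  moreover have "c > 0" unfolding c_def using assms b1_pos R_ne_1 by simp
  ultimately show ?thesis by (simp add: sgn_mult)
qed

lemma ell_greater_m_le_1:
  assumes "0 < q" "q \<le> 1"
  shows "(1-R)*(l q - m q) > 0"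
proof -
  have "D q > 0" using D_pos assms by simp
  then have "gap_quad q > 0" using gap_quad_pos assms by simp
  then show ?thesis using sgn_ell_minus_m[of q] \<open>D q > 0\<close> assms by (metis sgn_greater)
qed

lemma crossing_if_R_lt_1:
  assumes "R < 1"
  shows "\<exists>q0>1. m q0 = l q0 \<and> (\<forall>q. 0 < q \<and> q < q0 \<longrightarrow> m q < l q) \<and> (\<forall>q. q > q0 \<longrightarrow> m q > l q)"
proof -
  have "sgn (l q - m q) = sgn (-(1-R)*q^2 + (1-2*R)*q + R*b2)" if "q > 0" for q
  proof -
    have "sgn ((1-R)*(l q - m q)) = sgn (gap_quad q)"
      using sgn_ell_minus_m D_pos_if_R_lt_1 assms that by simp
    then show ?thesis using assms unfolding gap_quad_eq by (simp add: sgn_mult)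
  qed
  then obtain q0 where q0: "q0 > 0" "l q0 = m q0" "\<forall>q. 0 < q \<and> q < q0 \<longrightarrow> l q > m q"
      "\<forall>q. q > q0 \<longrightarrow> l q < m q"
    using sign_pattern_of_downward_parabola[of "1-R" "R*b2" l m "1-2*R"] assms R_pos b2_gt_1
    by auto
  have "l 1 > m 1" using ell_greater_m_le_1[of 1] assms by (simp add: zero_less_mult_iff)
  then have "\<not> q0 < 1" "q0 \<noteq> 1" using q0(2,4) by force+
  then have "q0 > 1" by simp
  then show ?thesis using q0 by (intro exI[of _ q0]) auto
qed

lemma mfun_less_ellfun_beyond_pole:
  assumes "R > 1" "q > R/(R-1)"
  shows "m q < l q"
proof -
  have D: "D q < 0" using D_sign_if_R_gt_1 assms by simp
  have "q > 1" using assms pole_gt_1[OF assms(1)] by linarith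
  then have "gap_quad q > 0" using gap_quad_pos D by (simp add: mult_neg_neg less_imp_le)
  moreover have "(1-R)*q/(b1*D q) > 0"
    using \<open>q > 1\<close> D assms b1_pos by (simp add: divide_neg_neg mult_neg_pos mult_pos_neg)
  moreover have "l q - m q = ((1-R)*q/(b1*D q)) * gap_quad q" using ell_minus_m D by simp
  ultimately show ?thesis by (metis diff_gt_0_iff_gt mult_pos_pos)
qed

lemma crossings_if_R_gt_1:
  assumes "R > 1"
  shows "(\<forall>q. 1 < q \<and> q < R/(R-1) \<longrightarrow> m q > l q) \<or>
    (\<exists>q1. 1 < q1 \<and> q1 < R/(R-1) \<and> m q1 = l q1 \<and>
       (\<forall>q. 1 < q \<and> q < R/(R-1) \<and> q \<noteq> q1 \<longrightarrow> m q > l q)) \<or>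
    (\<exists>q1 q2. 1 < q1 \<and> q1 < q2 \<and> q2 < R/(R-1) \<and> m q1 = l q1 \<and> m q2 = l q2 \<and>
       (\<forall>q. 1 < q \<and> q < q1 \<longrightarrow> m q > l q) \<and> (\<forall>q. q1 < q \<and> q < q2 \<longrightarrow> m q < l q) \<and>
       (\<forall>q. q2 < q \<and> q < R/(R-1) \<longrightarrow> m q > l q))"
proof (rule sign_pattern_of_upward_parabola)
  have quad: "gap_quad q = (R-1)*q^2 + (1-2*R)*q + R*b2" for q
    unfolding gap_quad_eq by simp
  show "R - 1 > 0" "1 < R/(R-1)" using assms pole_gt_1 by simp_all
  show "(R-1)*1^2 + (1-2*R)*1 + R*b2 > 0" "(R-1)*(R/(R-1))^2 + (1-2*R)*(R/(R-1)) + R*b2 > 0"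
    using gap_quad_pos[of 1] gap_quad_pos[of "R/(R-1)"] assms unfolding quad by (simp_all add: field_simps)
  fix q assume q: "1 < q" "q < R/(R-1)"
  have "sgn ((1-R)*(l q - m q)) = sgn (gap_quad q)"
    using sgn_ell_minus_m D_sign_if_R_gt_1 assms q by simp
  moreover have "(1-R)*(l q - m q) = (R-1)*(m q - l q)" by (simp add: algebra_simps)
  ultimately show "sgn (m q - l q) = sgn ((R-1)*q^2 + (1-2*R)*q + R*b2)"
    using assms unfolding quad by (simp add: sgn_mult)
qed

section \<open>Reduced forms of \<open>F\<close> and well-definedness\<close>

definition F_factored :: "real \<Rightarrow> real \<Rightarrow> real" where
  "F_factored q n = (1-R)*b1*(n - m q)*Oden_conj q n / (Onum_conj q n * ell_gap q n)"

lemma Onum_conj_nonzero: "q \<noteq> 1 \<Longrightarrow> Onum_conj q n \<noteq> 0"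
  using Onum_conj_sign[of q n] by auto

lemma F_red_eq_linear:
  assumes "q \<noteq> 1" "G q n \<noteq> 0"
  shows "F_red q n = -4*(1-R)^2*b1*(1-q)*(n - m q) / (Onum_conj q n * G q n)"
proof -
  define x u d W where "x = 1-R" and "u = 1-q" and "d = n - m q" and "W = Onum_conj q n"
  have "u \<noteq> 0" "W \<noteq> 0" using assms Onum_conj_nonzero unfolding u_def W_def by auto
  have "F_red q n = x*(G q n - 2*x*q*u)/(R*u*G q n)"
    unfolding F_red_def x_def u_def using assms R_pos by (simp add: field_simps power2_eq_square)
  also have "G q n - 2*x*q*u = -4*x*R*u^2*b1*d / W"
    using Onum_mult_conj[of q n] \<open>W \<noteq> 0\<close> unfolding x_def u_def d_def W_def by (simp add: field_simps)
  also have "x*(-4*x*R*u^2*b1*d / W)/(R*u*G q n) = -4*x^2*b1*u*d/(W*G q n)"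
    using \<open>u \<noteq> 0\<close> \<open>W \<noteq> 0\<close> assms(2) R_pos by (simp add: field_simps power2_eq_square)
  finally show ?thesis unfolding x_def u_def d_def W_def .
qed

lemma F_red_eq_0_iff: "q \<noteq> 1 \<Longrightarrow> G q n \<noteq> 0 \<Longrightarrow> F_red q n = 0 \<longleftrightarrow> n = m q"
  using F_red_eq_linear[of q n] R_ne_1 b1_pos Onum_conj_nonzero[of q n] by simp

lemma Oden_eq_via_conj:
  "Oden_conj q n \<noteq> 0 \<Longrightarrow> G q n = -4*(1-R)*(1-q)*ell_gap q n / Oden_conj q n"
  using Oden_mult_conj[of q n] by (simp add: field_simps)

lemma F_red_eq_factored:
  assumes "q \<noteq> 1" "Oden_conj q n \<noteq> 0" "ell_gap q n \<noteq> 0"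
  shows "F_red q n = F_factored q n"
proof -
  define x u d W C K where "x = 1-R" and "u = 1-q" and "d = n - m q" and "W = Onum_conj q n"
    and "C = Oden_conj q n" and "K = ell_gap q n"
  have nz: "x \<noteq> 0" "u \<noteq> 0" "W \<noteq> 0" "C \<noteq> 0" "K \<noteq> 0"
    using assms R_ne_1 Onum_conj_nonzero unfolding x_def u_def W_def C_def K_def by auto
  have G: "G q n = -4*x*u*K/C" using Oden_eq_via_conj[OF assms(2)] unfolding x_def u_def K_def C_def .
  then have "G q n \<noteq> 0" using nz by simp
  have "F_red q n = -4*x^2*b1*u*d/(W*(-4*x*u*K/C))"
    using F_red_eq_linear[OF assms(1) \<open>G q n \<noteq> 0\<close>] unfolding G x_def u_def d_def W_def .
  also have "\<dots> = x*b1*d*C/(W*K)" using nz by (simp add: field_simps power2_eq_square)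
  finally show ?thesis unfolding F_factored_def x_def d_def C_def W_def K_def .
qed

lemma F_red_eq_ratio:
  assumes "q \<noteq> 1" "Oden_conj q n \<noteq> 0" "D q \<noteq> 0" "n \<noteq> l q"
  shows "F_red q n = ((1-R)*Oden_conj q n/(D q*Onum_conj q n)) * ((n - m q)/(n - l q))"
proof -
  define x d e W C \<delta> where "x = 1-R" and "d = n - m q" and "e = n - l q" and "W = Onum_conj q n"
    and "C = Oden_conj q n" and "\<delta> = D q"
  have nz: "W \<noteq> 0" "e \<noteq> 0" "\<delta> \<noteq> 0"
    using assms Onum_conj_nonzero unfolding W_def e_def \<delta>_def by auto
  have K: "ell_gap q n = b1*\<delta>*e" using ell_gap_eq[OF assms(3)] unfolding \<delta>_def e_def .
  then have "ell_gap q n \<noteq> 0" using nz b1_pos by simp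
  have "F_red q n = x*b1*d*C/(W*(b1*\<delta>*e))"
    using F_red_eq_factored[OF assms(1,2) \<open>ell_gap q n \<noteq> 0\<close>]
    unfolding F_factored_def K x_def d_def C_def W_def .
  also have "\<dots> = (x*C/(\<delta>*W)) * (d/e)" using nz b1_pos by (simp add: field_simps)
  finally show ?thesis unfolding x_def d_def e_def C_def W_def \<delta>_def .
qed

abbreviation "FR \<equiv> Freg R b1 b2 b3"
abbreviation "FF \<equiv> Fform R b1 b2 b3"
abbreviation "Fe \<equiv> Fext R b1 b2 b3"
abbreviation "wd \<equiv> F_wd R b1 b2 b3"

lemma mem_Freg_iff: "(q,n) \<in> FR \<longleftrightarrow> q > 0 \<and> n > 0 \<and> q \<noteq> 1 \<and> q \<noteq> R/(R-1) \<and> G q n \<noteq> 0"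
  unfolding Freg_def by simp

lemma Fform_eq_F_red: "n \<noteq> 0 \<Longrightarrow> FF q n = F_red q n"
  unfolding Fform_def Ofun_def F_red_def using R_pos
  by (cases "q = 1"; cases "G q n = 0") (simp_all add: field_simps)

lemma isCont_Oden: "isCont (\<lambda>z. G (fst z) (snd z)) z"
  unfolding Oden_def phifun_def Esq_def by (intro continuous_intros)

lemma isCont_Oden_conj: "isCont (\<lambda>z. Oden_conj (fst z) (snd z)) z"
  unfolding Oden_conj_def rad_def phifun_def Esq_def by (intro continuous_intros)

lemma isCont_Onum_conj: "isCont (\<lambda>z. Onum_conj (fst z) (snd z)) z"
  unfolding Onum_conj_def rad_def phifun_def Esq_def by (intro continuous_intros)

lemma isCont_ell_gap: "isCont (\<lambda>z. ell_gap (fst z) (snd z)) z"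
  unfolding ell_gap_def gap_quad_def mfun_def by (intro continuous_intros)

lemma isCont_F_red:
  "fst z \<noteq> 1 \<Longrightarrow> G (fst z) (snd z) \<noteq> 0 \<Longrightarrow> isCont (\<lambda>z. F_red (fst z) (snd z)) z"
  unfolding F_red_def using R_pos by (intro continuous_intros isCont_Oden) auto

lemma isCont_F_factored:
  "Onum_conj (fst z) (snd z) * ell_gap (fst z) (snd z) \<noteq> 0 \<Longrightarrow> isCont (\<lambda>z. F_factored (fst z) (snd z)) z"
  unfolding F_factored_def mfun_def
  by (intro continuous_intros isCont_Oden_conj isCont_Onum_conj isCont_ell_gap) auto

lemma eventually_in_Freg: "\<forall>\<^sub>F z in at x within FR. z \<in> FR"
  unfolding eventually_at_filter by simp

lemma F_wd_Fext_eq_of_tendsto: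
  assumes "q > 0" "n \<ge> 0" and nontrivial: "at (q,n) within FR \<noteq> bot"
    and lim: "((\<lambda>z. F_red (fst z) (snd z)) \<longlongrightarrow> L) (at (q,n) within FR)"
    and at_point: "(q,n) \<in> FR \<Longrightarrow> F_red q n = L"
  shows "wd q n \<and> Fe q n = L"
proof -
  have "\<forall>\<^sub>F z in at (q,n) within FR. F_red (fst z) (snd z) = FF (fst z) (snd z)"
    using eventually_in_Freg by eventually_elim (auto simp: mem_Freg_iff Fform_eq_F_red)
  with lim have FF_lim: "((\<lambda>z. FF (fst z) (snd z)) \<longlongrightarrow> L) (at (q,n) within FR)"
    by (rule Lim_transform_eventually)
  then have "wd q n" unfolding F_wd_def using assms by blast
  moreover have "Fe q n = L"
  proof (cases "(q,n) \<in> FR")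
    case True
    then show ?thesis unfolding Fext_def using at_point Fform_eq_F_red by (simp add: mem_Freg_iff)
  next
    case False
    then show ?thesis unfolding Fext_def using tendsto_Lim[OF nontrivial FF_lim] by simp
  qed
  ultimately show ?thesis ..
qed

lemma tendsto_F_red_if_F_wd:
  assumes "wd q n" "(q,n) \<notin> FR"
  obtains L where "at (q,n) within FR \<noteq> bot" "((\<lambda>z. F_red (fst z) (snd z)) \<longlongrightarrow> L) (at (q,n) within FR)"
proof -
  from assms obtain L where nontrivial: "at (q,n) within FR \<noteq> bot"
    and lim: "((\<lambda>z. FF (fst z) (snd z)) \<longlongrightarrow> L) (at (q,n) within FR)"
    unfolding F_wd_def by blast
  have "\<forall>\<^sub>F z in at (q,n) within FR. FF (fst z) (snd z) = F_red (fst z) (snd z)"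
    using eventually_in_Freg by eventually_elim (auto simp: mem_Freg_iff Fform_eq_F_red)
  with lim nontrivial show ?thesis using that by (blast intro: Lim_transform_eventually)
qed

text \<open>Along the diagonal \<open>(q+t, n+t)\<close>, \<open>t > 0\<close>, one stays inside \<open>Freg\<close> also at the boundary
  points \<open>n = 0\<close>, \<open>q = 1\<close> and \<open>q = R/(R-1)\<close>.\<close>

lemma eventually_diagonal_in_Freg:
  assumes "q > 0" "n \<ge> 0" "\<forall>\<^sub>F t in at_right 0. G (q+t) (n+t) \<noteq> 0"
  shows "\<forall>\<^sub>F t in at_right 0. (q+t, n+t) \<in> FR"
  using assms(3) eventually_at_right_shift_ne[of q 1] eventually_at_right_shift_ne[of q "R/(R-1)"]
    eventually_at_right_less[of "0::real"]
  by eventually_elim (use assms in \<open>auto simp: mem_Freg_iff\<close>)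

lemma F_wd_Fext_eq_F_red:
  assumes "q > 0" "n \<ge> 0" "q \<noteq> 1" "G q n \<noteq> 0"
  shows "wd q n \<and> Fe q n = F_red q n"
proof (rule F_wd_Fext_eq_of_tendsto)
  have "((\<lambda>t. G (q+t) (n+t)) \<longlongrightarrow> G q n) (at_right 0)"
    using isCont_tendsto_compose[OF isCont_Oden tendsto_diagonal] by simp
  then have "\<forall>\<^sub>F t in at_right 0. G (q+t) (n+t) \<noteq> 0"
    using assms(4) by (rule tendsto_imp_eventually_ne)
  then show "at (q,n) within FR \<noteq> bot"
    using at_within_nontrivial_diagonal eventually_diagonal_in_Freg assms by blast
  show "((\<lambda>z. F_red (fst z) (snd z)) \<longlongrightarrow> F_red q n) (at (q,n) within FR)"
    using continuous_at_imp_continuous_at_within[OF isCont_F_red[of "(q,n)"]] assms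
    unfolding continuous_within by simp
qed (use assms in auto)

section \<open>The line \<open>q = 1\<close>\<close>

lemma phi_at_1: "phi 1 n = b1*(n - l 1)"
  unfolding phi_eq ell_1 using b1_pos by (simp add: field_simps)

lemma ell_gap_at_1: "ell_gap 1 n = phi 1 n"
  unfolding ell_gap_eq[of 1, simplified] phi_at_1 ..

lemma conj_at_1:
  assumes "(1-R)*(n - l 1) < 0"
  shows "Oden_conj 1 n = -2*phi 1 n" "Onum_conj 1 n = -2*phi 1 n" "phi 1 n \<noteq> 0"
proof -
  have "(1-R)*phi 1 n < 0"
    unfolding phi_at_1 using assms b1_pos by (simp add: mult.left_commute mult_pos_neg)
  then have "sgn (1-R) * \<bar>phi 1 n\<bar> = - phi 1 n" by (rule sgn_mult_abs_eq)
  moreover have "rad 1 n = \<bar>phi 1 n\<bar>" unfolding rad_def Esq_def by simp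
  ultimately show "Oden_conj 1 n = -2*phi 1 n" "Onum_conj 1 n = -2*phi 1 n"
    unfolding Oden_conj_def Onum_conj_def by simp_all
  show "phi 1 n \<noteq> 0" using \<open>(1-R)*phi 1 n < 0\<close> by auto
qed

lemma Oden_at_1:
  assumes "(1-R)*(n - l 1) > 0"
  shows "G 1 n = -2*phi 1 n" "phi 1 n \<noteq> 0"
proof -
  have "(1-R)*phi 1 n > 0"
    unfolding phi_at_1 using assms b1_pos by (simp add: mult.left_commute)
  then have "sgn (1-R) * \<bar>phi 1 n\<bar> = phi 1 n" by (rule sgn_mult_abs_eq)
  moreover have "rad 1 n = \<bar>phi 1 n\<bar>" unfolding rad_def Esq_def by simp
  ultimately show "G 1 n = -2*phi 1 n" unfolding Oden_eq by simp
  show "phi 1 n \<noteq> 0" using \<open>(1-R)*phi 1 n > 0\<close> by auto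
qed

lemma F_factored_at_1:
  assumes "(1-R)*(n - l 1) < 0"
  shows "F_factored 1 n = - ((1-R)*(n - m 1)) / (l 1 - n)"
proof -
  have "F_factored 1 n = (1-R)*b1*(n - m 1)/(b1*(n - l 1))"
    unfolding F_factored_def conj_at_1[OF assms] ell_gap_at_1 using conj_at_1(3)[OF assms]
    by (simp add: phi_at_1)
  also have "\<dots> = - ((1-R)*(n - m 1)) / (l 1 - n)"
    using b1_pos by (simp add: minus_divide_right)
  finally show ?thesis .
qed

lemma eventually_F_red_eq_F_factored_near_1:
  assumes "(1-R)*(n - l 1) < 0"
  shows "\<forall>\<^sub>F z in at (1,n). fst z \<noteq> 1 \<longrightarrow>
    G (fst z) (snd z) \<noteq> 0 \<and> F_red (fst z) (snd z) = F_factored (fst z) (snd z)"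
proof -
  have "\<forall>\<^sub>F z in at (1,n). Oden_conj (fst z) (snd z) \<noteq> 0"
    using isCont_Oden_conj[of "(1,n)"] conj_at_1[OF assms] unfolding isCont_def
    by (auto intro: tendsto_imp_eventually_ne)
  moreover have "\<forall>\<^sub>F z in at (1,n). ell_gap (fst z) (snd z) \<noteq> 0"
    using isCont_ell_gap[of "(1,n)"] conj_at_1[OF assms] ell_gap_at_1 unfolding isCont_def
    by (auto intro: tendsto_imp_eventually_ne)
  ultimately show ?thesis
  proof eventually_elim
    case (elim z)
    then show ?case
      using Oden_eq_via_conj[of "fst z" "snd z"] F_red_eq_factored[of "fst z" "snd z"] R_ne_1 by auto
  qed
qed

lemma Fext_at_1:
  assumes "n \<ge> 0" "(1-R)*n < (1-R)*l 1"
  shows "wd 1 n" "Fe 1 n = - ((1-R)*(n - m 1)) / (l 1 - n)"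
proof -
  have neg: "(1-R)*(n - l 1) < 0" using assms by (simp add: algebra_simps)
  note near = eventually_F_red_eq_F_factored_near_1[OF neg]
  have "isCont (\<lambda>z. F_factored (fst z) (snd z)) (1,n)"
    using isCont_F_factored conj_at_1[OF neg] ell_gap_at_1 by simp
  then have lim: "((\<lambda>z. F_factored (fst z) (snd z)) \<longlongrightarrow> F_factored 1 n) (at (1,n))"
    unfolding isCont_def by simp
  have "filterlim (\<lambda>t. (1+t, n+t)) (at (1,n)) (at_right 0)"
    using eventually_at_right_less[of "0::real"]
    by (intro filterlim_atI[OF tendsto_diagonal]) (auto elim: eventually_mono)
  from eventually_compose_filterlim[OF near this]
  have "\<forall>\<^sub>F t in at_right 0. G (1+t) (n+t) \<noteq> 0"
    using eventually_at_right_less[of "0::real"] by eventually_elim auto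
  then have nontrivial: "at (1,n) within FR \<noteq> bot"
    using at_within_nontrivial_diagonal eventually_diagonal_in_Freg assms(1) by simp
  have "\<forall>\<^sub>F z in at (1,n) within FR. F_factored (fst z) (snd z) = F_red (fst z) (snd z)"
    using eventually_in_Freg filter_leD[OF at_le[OF subset_UNIV] near]
    by eventually_elim (auto simp: mem_Freg_iff)
  with tendsto_within_subset[OF lim subset_UNIV]
  have "((\<lambda>z. F_red (fst z) (snd z)) \<longlongrightarrow> F_factored 1 n) (at (1,n) within FR)"
    by (rule Lim_transform_eventually)
  then have "wd 1 n \<and> Fe 1 n = F_factored 1 n"
    using F_wd_Fext_eq_of_tendsto[OF _ assms(1) nontrivial] by (simp add: mem_Freg_iff)
  then show "wd 1 n" "Fe 1 n = - ((1-R)*(n - m 1)) / (l 1 - n)"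
    using F_factored_at_1[OF neg] by simp_all
qed

lemma tendsto_Fext_at_1:
  assumes "n \<ge> 0" "(1-R)*n < (1-R)*l 1"
  shows "((\<lambda>q. Fe q n) \<longlongrightarrow> Fe 1 n) (at 1)"
proof -
  have neg: "(1-R)*(n - l 1) < 0" using assms by (simp add: algebra_simps)
  have cont: "isCont (\<lambda>z. F_factored (fst z) (snd z)) (1,n)"
    using isCont_F_factored conj_at_1[OF neg] ell_gap_at_1 by simp
  have to_point: "((\<lambda>q. (q, n)) \<longlongrightarrow> (1, n)) (at (1::real))" by (intro tendsto_intros)
  have "filterlim (\<lambda>q. (q, n)) (at (1,n)) (at (1::real))"
    using filterlim_atI[OF to_point] by (simp add: eventually_at_filter)
  note near = eventually_compose_filterlim[OF eventually_F_red_eq_F_factored_near_1[OF neg] this]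
  have "\<forall>\<^sub>F q in at (1::real). q \<noteq> 1" by (simp add: eventually_at_filter)
  moreover have "\<forall>\<^sub>F q in at (1::real). q > 0"
    using order_tendstoD(1)[OF tendsto_ident_at, of 0 "1::real"] by simp
  ultimately have "\<forall>\<^sub>F q in at 1. F_factored q n = Fe q n"
    using near by eventually_elim (use F_wd_Fext_eq_F_red[of _ n] assms(1) in auto)
  with isCont_tendsto_compose[OF cont to_point]
  show ?thesis using Fext_at_1(2)[OF assms] F_factored_at_1[OF neg]
    by (auto intro: Lim_transform_eventually)
qed

lemma tendsto_within_Freg_of_isCont:
  "isCont f x \<Longrightarrow> (f \<longlongrightarrow> f x) (at x within FR)"
  using continuous_at_imp_continuous_at_within unfolding continuous_within .

lemma not_F_wd_if_Oden_eq_0: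
  assumes "q \<noteq> 1" "G q n = 0"
  shows "\<not> wd q n"
proof
  assume "wd q n"
  then have "q > 0" unfolding F_wd_def by simp
  have "(q,n) \<notin> FR" using assms by (simp add: mem_Freg_iff)
  with \<open>wd q n\<close> obtain L where nontrivial: "at (q,n) within FR \<noteq> bot"
    and lim: "((\<lambda>z. F_red (fst z) (snd z)) \<longlongrightarrow> L) (at (q,n) within FR)"
    by (rule tendsto_F_red_if_F_wd)
  have G_lim: "((\<lambda>z. G (fst z) (snd z)) \<longlongrightarrow> 0) (at (q,n) within FR)"
    using tendsto_within_Freg_of_isCont[OF isCont_Oden, of "(q,n)"] assms(2) by simp
  have "\<forall>\<^sub>F z in at (q,n) within FR. G (fst z) (snd z) * F_red (fst z) (snd z)
      = G (fst z) (snd z) * ((1-R)/(R*(1 - fst z))) - 2*(1-R)^2*fst z/R"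
    using eventually_in_Freg
    by eventually_elim (use R_pos in \<open>auto simp: mem_Freg_iff F_red_def field_simps\<close>)
  moreover have "((\<lambda>z. G (fst z) (snd z) * ((1-R)/(R*(1 - fst z))) - 2*(1-R)^2*fst z/R)
      \<longlongrightarrow> 0 * ((1-R)/(R*(1 - q))) - 2*(1-R)^2*q/R) (at (q,n) within FR)"
    using assms R_pos tendsto_fst[OF tendsto_ident_at[of "(q,n)" FR]]
    by (intro tendsto_intros G_lim) auto
  ultimately have "0 * ((1-R)/(R*(1 - q))) - 2*(1-R)^2*q/R = 0"
    by (rule limit_of_vanishing_multiple_eq_0[OF nontrivial lim G_lim])
  then show False using \<open>q > 0\<close> R_pos R_ne_1 by simp
qed

lemma not_F_wd_at_1_beyond_ell:
  assumes "(1-R)*(n - l 1) > 0"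
  shows "\<not> wd 1 n"
proof
  assume "wd 1 n"
  moreover have "(1,n) \<notin> FR" by (simp add: mem_Freg_iff)
  ultimately obtain L where nontrivial: "at (1,n) within FR \<noteq> bot"
    and lim: "((\<lambda>z. F_red (fst z) (snd z)) \<longlongrightarrow> L) (at (1,n) within FR)"
    by (rule tendsto_F_red_if_F_wd)
  have "G 1 n \<noteq> 0" using Oden_at_1[OF assms] by simp
  have "isCont (\<lambda>z::real\<times>real. 1 - fst z) (1,n)" by (intro continuous_intros)
  from tendsto_within_Freg_of_isCont[OF this]
  have q_lim: "((\<lambda>z. 1 - fst z) \<longlongrightarrow> 0) (at (1,n) within FR)" by simp
  have "\<forall>\<^sub>F z in at (1,n) within FR. (1 - fst z) * F_red (fst z) (snd z)
      = (1-R)/R - 2*(1-R)^2*fst z*(1 - fst z)/(R * G (fst z) (snd z))"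
    using eventually_in_Freg
    by eventually_elim (use R_pos in \<open>auto simp: mem_Freg_iff F_red_def field_simps\<close>)
  moreover have "((\<lambda>z. (1-R)/R - 2*(1-R)^2*fst z*(1 - fst z)/(R * G (fst z) (snd z)))
      \<longlongrightarrow> (1-R)/R - 2*(1-R)^2*1*(1 - 1)/(R * G 1 n)) (at (1,n) within FR)"
    using \<open>G 1 n \<noteq> 0\<close> R_pos tendsto_fst[OF tendsto_ident_at[of "(1,n)" FR]]
    by (intro tendsto_intros tendsto_within_Freg_of_isCont[OF isCont_Oden, of "(1,n)", simplified]) auto
  ultimately have "(1-R)/R - 2*(1-R)^2*1*(1 - 1)/(R * G 1 n) = 0"
    by (rule limit_of_vanishing_multiple_eq_0[OF nontrivial lim q_lim])
  then show False using R_pos R_ne_1 by simp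
qed

text \<open>On the diagonal through \<open>(1, l(1))\<close> both \<open>phi\<close> and the square root are linear in \<open>t\<close>,
  so \<open>G\<close> vanishes there to first order only.\<close>

lemma Oden_diagonal_at_ell_1:
  obtains \<kappa> where "(1-R)*\<kappa> < 0" "\<kappa> + 2*(1-R) \<noteq> 0"
    "\<And>t. t > 0 \<Longrightarrow> G (1+t) (l 1 + t) = t*(\<kappa> - 2*(1-R)^2*t)"
proof -
  define \<beta> where "\<beta> = b1 + (1-R)*(b3 - 2*R)"
  define \<rho> where "\<rho> = sqrt (\<beta>^2 + 4*R^2*(1-R)^2*(b2-1))"
  define \<kappa> where "\<kappa> = -2*(1-R) - (sgn (1-R) * \<rho> + \<beta>)"
  have "\<bar>\<beta>\<bar> < \<rho>"
  proof -
    have "sqrt (\<beta>^2) < \<rho>" unfolding \<rho>_def using R_pos R_ne_1 b2_gt_1 by (intro real_sqrt_less_mono) simp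
    then show ?thesis by simp
  qed
  then have dominant: "(1-R)*(sgn (1-R) * \<rho> + \<beta>) > 0"
    using mult_sgn_dominant_strict(2) R_ne_1 by simp
  moreover have "(1-R)*\<kappa> = -2*(1-R)^2 - (1-R)*(sgn (1-R) * \<rho> + \<beta>)"
    unfolding \<kappa>_def by (simp add: algebra_simps power2_eq_square)
  moreover have "(1-R)^2 > 0" using R_ne_1 by simp
  ultimately have "(1-R)*\<kappa> < 0" by linarith
  moreover have "\<kappa> + 2*(1-R) \<noteq> 0"
  proof
    assume "\<kappa> + 2*(1-R) = 0"
    then have "sgn (1-R) * \<rho> + \<beta> = 0" unfolding \<kappa>_def by simp
    then show False using dominant by simp
  qed
  moreover have "G (1+t) (l 1 + t) = t*(\<kappa> - 2*(1-R)^2*t)" if "t > 0" for t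
  proof -
    have phi: "phi (1+t) (l 1 + t) = t*\<beta>"
      unfolding phifun_def ellfun_def mfun_def \<beta>_def using b1_pos by (simp add: field_simps power2_eq_square)
    have "rad (1+t) (l 1 + t) = sqrt (t^2 * (\<beta>^2 + 4*R^2*(1-R)^2*(b2-1)))"
      unfolding rad_def phi Esq_def by (simp add: algebra_simps power2_eq_square)
    also have "\<dots> = t*\<rho>" unfolding \<rho>_def real_sqrt_mult using that by simp
    finally show ?thesis unfolding Oden_eq phi \<kappa>_def by (simp add: algebra_simps power2_eq_square)
  qed
  ultimately show ?thesis using that by blast
qed

lemma tendsto_diagonal_at_ell_1:
  assumes "l 1 \<ge> 0"
  obtains c where "c \<noteq> 0" "\<forall>\<^sub>F t in at_right 0. (1+t, l 1 + t) \<in> FR"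
    "((\<lambda>t. t * F_red (1+t) (l 1 + t)) \<longlongrightarrow> c) (at_right 0)"
proof -
  obtain \<kappa> where \<kappa>: "(1-R)*\<kappa> < 0" "\<kappa> + 2*(1-R) \<noteq> 0"
    and G_diag: "\<And>t. t > 0 \<Longrightarrow> G (1+t) (l 1 + t) = t*(\<kappa> - 2*(1-R)^2*t)"
    using Oden_diagonal_at_ell_1 by blast
  have "\<kappa> \<noteq> 0" using \<kappa>(1) by auto
  define c where "c = -(1-R)/R - 2*(1-R)^2/(R*\<kappa>)"
  have "c = - ((1-R)*(\<kappa> + 2*(1-R))) / (R*\<kappa>)"
    unfolding c_def using R_pos \<open>\<kappa> \<noteq> 0\<close> by (simp add: field_simps power2_eq_square)
  then have "c \<noteq> 0" using \<kappa>(2) R_ne_1 R_pos \<open>\<kappa> \<noteq> 0\<close> by simp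
  have "((\<lambda>t. \<kappa> - 2*(1-R)^2*t) \<longlongrightarrow> \<kappa> - 2*(1-R)^2*0) (at_right (0::real))"
    by (intro tendsto_intros)
  then have "((\<lambda>t. \<kappa> - 2*(1-R)^2*t) \<longlongrightarrow> \<kappa>) (at_right (0::real))" by simp
  from tendsto_imp_eventually_ne[OF this \<open>\<kappa> \<noteq> 0\<close>]
  have ne: "\<forall>\<^sub>F t in at_right 0. t > 0 \<and> \<kappa> - 2*(1-R)^2*t \<noteq> 0"
    using eventually_at_right_less[of "0::real"] by eventually_elim simp
  then have in_Freg: "\<forall>\<^sub>F t in at_right 0. (1+t, l 1 + t) \<in> FR"
    using eventually_diagonal_in_Freg[OF _ assms] G_diag by (simp add: eventually_mono)
  have "((\<lambda>t. -(1-R)/R - 2*(1-R)^2*(1+t)/(R*(\<kappa> - 2*(1-R)^2*t)))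
      \<longlongrightarrow> -(1-R)/R - 2*(1-R)^2*(1+0)/(R*(\<kappa> - 2*(1-R)^2*0))) (at_right 0)"
    using R_pos \<open>\<kappa> \<noteq> 0\<close> by (intro tendsto_intros) auto
  then have "((\<lambda>t. -(1-R)/R - 2*(1-R)^2*(1+t)/(R*(\<kappa> - 2*(1-R)^2*t))) \<longlongrightarrow> c) (at_right 0)"
    unfolding c_def by simp
  moreover have "\<forall>\<^sub>F t in at_right 0.
      -(1-R)/R - 2*(1-R)^2*(1+t)/(R*(\<kappa> - 2*(1-R)^2*t)) = t * F_red (1+t) (l 1 + t)"
    using ne
  proof eventually_elim
    case (elim t)
    then have "F_red (1+t) (l 1 + t) = (1-R)/(R*(-t)) - 2*(1-R)^2*(1+t)/(R*(t*(\<kappa> - 2*(1-R)^2*t)))"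
      unfolding F_red_def G_diag[OF conjunct1[OF elim]] by simp
    then show ?case using elim R_pos by (simp only:) (simp add: field_simps)
  qed
  ultimately have "((\<lambda>t. t * F_red (1+t) (l 1 + t)) \<longlongrightarrow> c) (at_right 0)"
    by (rule Lim_transform_eventually)
  with \<open>c \<noteq> 0\<close> in_Freg show ?thesis using that by blast
qed

lemma not_F_wd_at_1_ell: "\<not> wd 1 (l 1)"
proof
  assume "wd 1 (l 1)"
  then have "l 1 \<ge> 0" unfolding F_wd_def by simp
  then obtain c where "c \<noteq> 0" and in_Freg: "\<forall>\<^sub>F t in at_right 0. (1+t, l 1 + t) \<in> FR"
    and scaled: "((\<lambda>t. t * F_red (1+t) (l 1 + t)) \<longlongrightarrow> c) (at_right 0)"
    by (rule tendsto_diagonal_at_ell_1)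
  have "(1, l 1) \<notin> FR" by (simp add: mem_Freg_iff)
  with \<open>wd 1 (l 1)\<close> obtain L
    where "((\<lambda>z. F_red (fst z) (snd z)) \<longlongrightarrow> L) (at (1, l 1) within FR)"
    by (rule tendsto_F_red_if_F_wd)
  from filterlim_compose[OF this filterlim_diagonal_at_within[OF in_Freg]]
  have "((\<lambda>t. F_red (1+t) (l 1 + t)) \<longlongrightarrow> L) (at_right 0)" by simp
  then have "((\<lambda>t. t * F_red (1+t) (l 1 + t)) \<longlongrightarrow> 0 * L) (at_right 0)"
    by (intro tendsto_mult tendsto_ident_at)
  with scaled \<open>c \<noteq> 0\<close> show False using tendsto_unique[OF trivial_limit_at_right_real] by force
qed

lemma F_wd_at_1_iff:
  assumes "n \<ge> 0"
  shows "wd 1 n \<longleftrightarrow> (1-R)*n < (1-R)*l 1"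
proof
  assume "wd 1 n"
  then have "n \<noteq> l 1" "\<not> (1-R)*(n - l 1) > 0"
    using not_F_wd_at_1_ell not_F_wd_at_1_beyond_ell by auto
  then have "(1-R)*(n - l 1) < 0" using R_ne_1 by (simp add: not_less less_le)
  then show "(1-R)*n < (1-R)*l 1" by (simp add: algebra_simps)
qed (use Fext_at_1 assms in auto)

section \<open>Limits and signs of \<open>F\<close>\<close>

lemma Oden_nonzero_beyond_1: "q \<noteq> 1 \<Longrightarrow> (1-q)*D q \<le> 0 \<Longrightarrow> G q n \<noteq> 0"
  using Oden_sign[of q n] by auto

lemma Oden_sign_below_ell:
  assumes "(1-q)*D q > 0" "(1-R)*(n - l q) < 0"
  shows "(1-R) * G q n > 0"
proof -
  define x u d e g c where "x = 1-R" and "u = 1-q" and "d = D q" and "e = n - l q"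
    and "g = G q n" and "c = Oden_conj q n"
  have "d \<noteq> 0" using assms(1) unfolding d_def u_def by auto
  then have prod: "g*c = -4*x*u*(b1*d*e)"
    using Oden_mult_conj[of q n] ell_gap_eq[of q n] unfolding x_def u_def d_def e_def g_def c_def
    by simp
  have "(x*g)*(x*c) = x^2*(g*c)" by (simp add: power2_eq_square)
  also have "\<dots> = 4*b1*x^2*(u*d)*(-(x*e))" unfolding prod by (simp add: algebra_simps)
  also have "\<dots> > 0"
  proof (rule mult_pos_pos[OF mult_pos_pos])
    show "4*b1*x^2 > 0" "u*d > 0" "-(x*e) > 0"
      using assms b1_pos R_ne_1 unfolding x_def u_def d_def e_def by simp_all
  qed
  finally have "(x*g)*(x*c) > 0" .
  moreover have "x*c > 0" using Oden_conj_sign[OF assms(1)] unfolding x_def c_def .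
  ultimately show ?thesis unfolding x_def g_def by (rule zero_less_mult_pos2)
qed

lemma Oden_at_ell:
  assumes "(1-q)*D q > 0"
  shows "G q (l q) = 0"
proof -
  have "D q \<noteq> 0" using assms by auto
  then have "G q (l q) * Oden_conj q (l q) = 0"
    using Oden_mult_conj[of q "l q"] ell_gap_eq[of q "l q"] by simp
  then show ?thesis using Oden_conj_sign[OF assms, of "l q"] by auto
qed

lemma F_wd_at_pole:
  assumes "R > 1" "n \<ge> 0"
  shows "wd (R/(R-1)) n"
proof -
  have "R/(R-1) \<noteq> 1" "D (R/(R-1)) = 0" using assms pole_gt_1 by (auto simp: field_simps)
  then have "G (R/(R-1)) n \<noteq> 0" using Oden_nonzero_beyond_1 by simp
  then show ?thesis using F_wd_Fext_eq_F_red \<open>R/(R-1) \<noteq> 1\<close> pole_gt_1 assms by force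
qed

lemma Fext_eq_0_iff:
  assumes "wd q n"
  shows "Fe q n = 0 \<longleftrightarrow> n = m q"
proof (cases "q = 1")
  case True
  have "n \<ge> 0" using assms unfolding F_wd_def by simp
  then have "(1-R)*n < (1-R)*l 1" using F_wd_at_1_iff assms True by simp
  then have "l 1 \<noteq> n" by auto
  then show ?thesis using Fext_at_1(2)[OF \<open>n \<ge> 0\<close> \<open>(1-R)*n < _\<close>] True R_ne_1 by simp
next
  case False
  then have "G q n \<noteq> 0" using not_F_wd_if_Oden_eq_0 assms by blast
  moreover have "q > 0" "n \<ge> 0" using assms unfolding F_wd_def by simp_all
  ultimately show ?thesis using F_wd_Fext_eq_F_red F_red_eq_0_iff False by simp
qed

lemma tendsto_Oden_in_n: "((\<lambda>n. G q n) \<longlongrightarrow> G q x) (at x within S)"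
proof -
  have "((\<lambda>n. (q, n)) \<longlongrightarrow> (q, x)) (at x within S)" by (intro tendsto_intros)
  from isCont_tendsto_compose[OF isCont_Oden this] show ?thesis by simp
qed

text \<open>Multiplying by \<open>1 - R\<close> treats both signs of \<open>1 - R\<close> at once.\<close>

lemma Fext_scaled_tendsto_at_bot_at_1:
  "filterlim (\<lambda>n. (1-R) * Fe 1 n) at_bot (at (l 1) within {n. 0 < n \<and> (1-R)*n < (1-R)*l 1})"
  (is "filterlim _ at_bot ?F")
proof -
  have in_S: "\<forall>\<^sub>F n in ?F. 0 < n \<and> (1-R)*n < (1-R)*l 1"
    unfolding eventually_at_filter by simp
  have "\<forall>\<^sub>F n in ?F. (- ((1-R)^3*(n - m 1))) * inverse ((1-R)*(l 1 - n)) = (1-R) * Fe 1 n"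
    using in_S
  proof eventually_elim
    case (elim n)
    have alg: "- (x^3*a) * inverse (x*b) = x * (- (x*a)/b)" if "x \<noteq> 0" "b \<noteq> 0" for x a b :: real
      using that by (simp add: field_simps power3_eq_cube)
    have "l 1 - n \<noteq> 0" using elim by auto
    then show ?case using Fext_at_1(2)[of n] alg[of "1-R" "l 1 - n" "n - m 1"] elim R_ne_1 by simp
  qed
  moreover have "filterlim (\<lambda>n. (- ((1-R)^3*(n - m 1))) * inverse ((1-R)*(l 1 - n))) at_bot ?F"
  proof (rule filterlim_tendsto_neg_mult_at_bot)
    show "((\<lambda>n. - ((1-R)^3*(n - m 1))) \<longlongrightarrow> - ((1-R)^3*(l 1 - m 1))) ?F" by (intro tendsto_intros)
    have "(1-R)^2 * ((1-R)*(l 1 - m 1)) > 0" using ell_greater_m_le_1[of 1] R_ne_1 by simp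
    then show "- ((1-R)^3*(l 1 - m 1)) < 0" by (simp add: power3_eq_cube power2_eq_square)
    have "((\<lambda>n. (1-R)*(l 1 - n)) \<longlongrightarrow> (1-R)*(l 1 - l 1)) ?F" by (intro tendsto_intros)
    then have "((\<lambda>n. (1-R)*(l 1 - n)) \<longlongrightarrow> 0) ?F" by simp
    moreover have "\<forall>\<^sub>F n in ?F. (1-R)*(l 1 - n) > 0"
      using in_S by eventually_elim (simp add: algebra_simps)
    ultimately show "filterlim (\<lambda>n. inverse ((1-R)*(l 1 - n))) at_top ?F"
      by (rule filterlim_inverse_at_top)
  qed
  ultimately show ?thesis by (simp add: filterlim_cong)
qed

lemma Fext_scaled_tendsto_at_bot_below_1:
  assumes "0 < q" "q < 1"
  shows "filterlim (\<lambda>n. (1-R) * Fe q n) at_bot (at (l q) within {n. 0 < n \<and> (1-R)*n < (1-R)*l q})"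
    (is "filterlim _ at_bot ?F")
proof -
  have in_S: "\<forall>\<^sub>F n in ?F. 0 < n \<and> (1-R)*n < (1-R)*l q"
    unfolding eventually_at_filter by simp
  have below: "(1-q)*D q > 0" using assms D_pos by simp
  have G_pos: "\<forall>\<^sub>F n in ?F. (1-R) * G q n > 0"
    using in_S by eventually_elim (use Oden_sign_below_ell[OF below] in \<open>simp add: algebra_simps\<close>)
  have "\<forall>\<^sub>F n in ?F. (1-R)^2/(R*(1-q)) + (-2*(1-R)^4*q/R) * inverse ((1-R) * G q n)
      = (1-R) * Fe q n"
    using in_S G_pos
  proof eventually_elim
    case (elim n)
    then have "G q n \<noteq> 0" by auto
    then have "Fe q n = F_red q n" using F_wd_Fext_eq_F_red[of q n] assms elim by simp
    have alg: "x^2/(R*u) + (-2*x^4*q/R) * inverse (x*g) = x * (x/(R*u) - 2*x^2*q/(R*g))"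
      if "x \<noteq> 0" "g \<noteq> 0" "u \<noteq> 0" for x u g :: real
      using that R_pos by (simp add: field_simps power2_eq_square power4_eq_xxxx)
    show ?case unfolding \<open>Fe q n = F_red q n\<close> F_red_def
      using alg[of "1-R" "G q n" "1-q"] \<open>G q n \<noteq> 0\<close> R_ne_1 assms by simp
  qed
  moreover have "filterlim (\<lambda>n. (1-R)^2/(R*(1-q)) + (-2*(1-R)^4*q/R) * inverse ((1-R) * G q n))
      at_bot ?F"
  proof (subst filterlim_tendsto_add_at_bot_iff[OF tendsto_const])
    have "((\<lambda>n. (1-R) * G q n) \<longlongrightarrow> 0) ?F"
      using tendsto_mult[OF tendsto_const tendsto_Oden_in_n, of "1-R" q "l q"] Oden_at_ell[OF below]
      by simp
    then have "filterlim (\<lambda>n. inverse ((1-R) * G q n)) at_top ?F"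
      using G_pos by (rule filterlim_inverse_at_top)
    moreover have "-2*(1-R)^4*q/R < 0" using assms R_pos R_ne_1 by simp
    ultimately show "filterlim (\<lambda>n. (-2*(1-R)^4*q/R) * inverse ((1-R) * G q n)) at_bot ?F"
      by (intro filterlim_tendsto_neg_mult_at_bot[OF tendsto_const])
  qed
  ultimately show ?thesis by (simp add: filterlim_cong)
qed

lemma Fext_scaled_tendsto_at_bot:
  "0 < q \<Longrightarrow> q \<le> 1 \<Longrightarrow>
    filterlim (\<lambda>n. (1-R) * Fe q n) at_bot (at (l q) within {n. 0 < n \<and> (1-R)*n < (1-R)*l q})"
  using Fext_scaled_tendsto_at_bot_at_1 Fext_scaled_tendsto_at_bot_below_1
  by (cases "q = 1") simp_all

lemma Fext_tendsto_at_bot_below_ell: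
  assumes "R < 1" "0 < q" "q \<le> 1"
  shows "filterlim (\<lambda>n. Fe q n) at_bot (at (l q) within {n. 0 < n \<and> n < l q})"
proof -
  have "{n. 0 < n \<and> (1-R)*n < (1-R)*l q} = {n. 0 < n \<and> n < l q}" using assms by auto
  with Fext_scaled_tendsto_at_bot[OF assms(2,3)]
  have lim: "filterlim (\<lambda>n. (1-R) * Fe q n) at_bot (at (l q) within {n. 0 < n \<and> n < l q})"
    by simp
  have "filterlim (\<lambda>n. inverse (1-R) * ((1-R) * Fe q n)) at_bot
      (at (l q) within {n. 0 < n \<and> n < l q})"
    using filterlim_tendsto_pos_mult_at_bot[OF tendsto_const _ lim, of "inverse (1-R)"] assms by simp
  then show ?thesis using R_ne_1 by (simp add: mult.assoc[symmetric])
qed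

lemma Fext_tendsto_at_top_above_ell:
  assumes "R > 1" "0 < q" "q \<le> 1"
  shows "filterlim (\<lambda>n. Fe q n) at_top (at (l q) within {n. 0 < n \<and> l q < n})"
proof -
  have "{n. 0 < n \<and> (1-R)*n < (1-R)*l q} = {n. 0 < n \<and> l q < n}"
    using assms by (auto simp: mult_less_cancel_left)
  with Fext_scaled_tendsto_at_bot[OF assms(2,3)]
  have "filterlim (\<lambda>n. (1-R) * Fe q n) at_bot (at (l q) within {n. 0 < n \<and> l q < n})" by simp
  then have "filterlim (\<lambda>n. inverse (1-R) * ((1-R) * Fe q n)) at_top
      (at (l q) within {n. 0 < n \<and> l q < n})"
    using assms by (subst filterlim_tendsto_neg_mult_at_top_iff[OF tendsto_const]) simp_all
  then show ?thesis using R_ne_1 by (simp add: mult.assoc[symmetric])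
qed

lemma Oden_at_ell_value:
  assumes "D q \<noteq> 0" "G q (l q) \<noteq> 0"
  shows "G q (l q) = 2*(1-R)*(1-q)*((D q)^2 + (b2-1)*R^2)/D q"
proof -
  have "G q (l q) * Oden_conj q (l q) = 0" using Oden_mult_conj ell_gap_eq assms(1) by simp
  then have "Oden_conj q (l q) = 0" using assms(2) by simp
  then have "G q (l q) = G q (l q) + Oden_conj q (l q)" by simp
  also have "\<dots> = 2*(2*(1-R)*(1-q)*D q - phi q (l q))" unfolding Oden_eq Oden_conj_def by simp
  also have "phi q (l q) = (1-R)*q*gap_quad q/D q + (1-R)*R*((1-q)^2 - (b2-1))"
    unfolding phi_eq ell_minus_m[OF assms(1)] using b1_pos by simp
  also have "2*(2*(1-R)*(1-q)*D q - ((1-R)*q*gap_quad q/D q + (1-R)*R*((1-q)^2 - (b2-1))))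
      = 2*(2*(1-R)*(1-q)*(D q)^2 - (1-R)*q*gap_quad q - (1-R)*R*D q*((1-q)^2 - (b2-1)))/D q"
    using assms(1) by (simp add: field_simps power2_eq_square)
  also have "2*(1-R)*(1-q)*(D q)^2 - (1-R)*q*gap_quad q - (1-R)*R*D q*((1-q)^2 - (b2-1))
      = (1-R)*(1-q)*((D q)^2 + (b2-1)*R^2)"
    unfolding gap_quad_def by (simp add: algebra_simps power2_eq_square)
  finally show ?thesis by simp
qed

lemma F_red_at_ell:
  assumes "q \<noteq> 1" "D q \<noteq> 0" "G q (l q) \<noteq> 0"
  shows "F_red q (l q) = - ((1-R)/(R*(1-q))) * (q*D q/((D q)^2 + (b2-1)*R^2) - 1)"
proof -
  define x u d E where "x = 1-R" and "u = 1-q" and "d = D q" and "E = (D q)^2 + (b2-1)*R^2"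
  have "(b2-1)*R^2 > 0" using b2_gt_1 R_pos by simp
  then have "E \<noteq> 0" unfolding E_def using zero_le_power2[of "D q"] by linarith
  moreover have "x \<noteq> 0" "u \<noteq> 0" "d \<noteq> 0" using assms R_ne_1 unfolding x_def u_def d_def by auto
  moreover have "F_red q (l q) = x/(R*u) - 2*x^2*q/(R*(2*x*u*E/d))"
    unfolding F_red_def Oden_at_ell_value[OF assms(2,3)] x_def u_def d_def E_def by simp
  ultimately have "F_red q (l q) = - (x/(R*u)) * (q*d/E - 1)"
    using R_pos by (simp add: field_simps power2_eq_square)
  then show ?thesis unfolding x_def u_def d_def E_def .
qed

lemma Fext_tendsto_at_ell:
  assumes "q > 1" "D q > 0"
  shows "((\<lambda>n. Fe q n) \<longlongrightarrow> - ((1-R)/(R*(1-q))) * (q*D q/((D q)^2 + (b2-1)*R^2) - 1))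
    (at (l q) within {0<..})"
proof -
  have G: "G q n \<noteq> 0" for n
    using Oden_nonzero_beyond_1 assms by (simp add: mult_nonpos_nonneg)
  have "((\<lambda>n. (q, n)) \<longlongrightarrow> (q, l q)) (at (l q) within {0<..})" by (intro tendsto_intros)
  from isCont_tendsto_compose[OF isCont_F_red this]
  have "((\<lambda>n. F_red q n) \<longlongrightarrow> F_red q (l q)) (at (l q) within {0<..})"
    using G assms by simp
  moreover have "\<forall>\<^sub>F n in at (l q) within {0<..}. F_red q n = Fe q n"
    unfolding eventually_at_filter
    by (intro always_eventually allI impI) (use F_wd_Fext_eq_F_red G assms in auto)
  ultimately show ?thesis using F_red_at_ell[of q] G assms by (simp add: Lim_transform_eventually)
qed

lemma Fext_sign_beyond_1:
  assumes "q > 1" "D q \<ge> 0" "n \<ge> 0"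
  shows "n > m q \<Longrightarrow> Fe q n < 0" "n < m q \<Longrightarrow> Fe q n > 0"
proof -
  define W g where "W = Onum_conj q n" and "g = G q n"
  have "(1-R)*g < 0" "(1-R)*W > 0"
    using Oden_sign[of q n] Onum_conj_sign[of q n] assms unfolding g_def W_def
    by (simp_all add: mult_nonpos_nonneg)
  then have "(1-R)^2 * (W*g) < 0"
    by (metis mult.commute mult.left_commute mult_pos_neg power2_eq_square)
  then have "W*g < 0" by (simp add: mult_less_0_iff)
  moreover have "(1-R)^2*b1*(q-1) > 0" using assms b1_pos R_ne_1 by simp
  moreover define k where "k = -4*(1-R)^2*b1*(1-q) / (W*g)"
  ultimately have "k < 0" by (simp add: divide_pos_neg algebra_simps)
  have "g \<noteq> 0" using \<open>(1-R)*g < 0\<close> by auto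
  then have "Fe q n = k * (n - m q)"
    using F_wd_Fext_eq_F_red[of q n] F_red_eq_linear[of q n] assms unfolding W_def g_def k_def by simp
  then show "n > m q \<Longrightarrow> Fe q n < 0" "n < m q \<Longrightarrow> Fe q n > 0"
    using \<open>k < 0\<close> by (simp_all add: mult_neg_pos mult_neg_neg)
qed

lemma ell_minus_m_sign:
  assumes "q > 0" "(1-q)*D q > 0"
  shows "(1-R)*D q*(l q - m q) > 0"
proof -
  have "D q \<noteq> 0" using assms by auto
  then have "(1-R)*D q*(l q - m q) = (1-R)^2*q*gap_quad q/b1"
    using ell_minus_m b1_pos by (simp add: power2_eq_square)
  then show ?thesis using gap_quad_pos[of q] assms b1_pos R_ne_1 by simp
qed

lemma Fext_eq_ratio:
  assumes "q > 0" "(1-q)*D q > 0" "n \<ge> 0" "n \<noteq> l q"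
  obtains c where "(1-R)*D q*c > 0" "Fe q n = c * ((n - m q)/(n - l q))"
proof -
  define C W where "C = Oden_conj q n" and "W = Onum_conj q n"
  have "q \<noteq> 1" "D q \<noteq> 0" using assms(2) by auto
  have "(1-R)*C > 0" "(1-R)*W > 0"
    using Oden_conj_sign[OF assms(2)] Onum_conj_sign[OF \<open>q \<noteq> 1\<close>] unfolding C_def W_def by auto
  have "ell_gap q n \<noteq> 0" using ell_gap_eq[OF \<open>D q \<noteq> 0\<close>] \<open>D q \<noteq> 0\<close> assms b1_pos by simp
  moreover have C0: "Oden_conj q n \<noteq> 0" using \<open>(1-R)*C > 0\<close> unfolding C_def by auto
  ultimately have "G q n \<noteq> 0" using Oden_eq_via_conj[of q n] \<open>q \<noteq> 1\<close> R_ne_1 by simp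
  then have "Fe q n = ((1-R)*C/(D q*W)) * ((n - m q)/(n - l q))"
    using F_wd_Fext_eq_F_red[of q n] F_red_eq_ratio[of q n] assms \<open>q \<noteq> 1\<close> \<open>D q \<noteq> 0\<close>
      C0 unfolding C_def W_def by auto
  moreover have "(1-R)*D q*((1-R)*C/(D q*W)) > 0"
  proof -
    define d where "d = D q"
    have "(1-R)*d*((1-R)*C/(d*W)) = ((1-R)*C)*((1-R)/W)"
      using \<open>D q \<noteq> 0\<close> unfolding d_def[symmetric] by simp
    moreover have "(1-R)/W > 0"
      using \<open>(1-R)*W > 0\<close> by (auto simp: zero_less_mult_iff zero_less_divide_iff)
    ultimately show ?thesis using \<open>(1-R)*C > 0\<close> unfolding d_def by (metis mult_pos_pos)
  qed
  ultimately show ?thesis using that by blast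
qed

lemma Fext_sign_m_ell:
  assumes "q > 0" "(1-q)*D q > 0" "(1-R)*D q > 0" "n \<ge> 0"
  shows "m q < l q" "m q < n \<Longrightarrow> n < l q \<Longrightarrow> Fe q n < 0" "n < m q \<or> n > l q \<Longrightarrow> Fe q n > 0"
proof -
  show "m q < l q" using ell_minus_m_sign[OF assms(1,2)] assms(3) by (simp add: zero_less_mult_iff)
  show "Fe q n < 0" if between: "m q < n" "n < l q"
  proof -
    have "n \<noteq> l q" using between by simp
    then obtain c where "(1-R)*D q*c > 0" "Fe q n = c * ((n - m q)/(n - l q))"
      using Fext_eq_ratio[OF assms(1,2,4)] by blast
    moreover have "(n - m q)/(n - l q) < 0" using between by (simp add: divide_pos_neg)
    ultimately show ?thesis using assms(3) by (metis mult_pos_neg zero_less_mult_pos)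
  qed
  show "Fe q n > 0" if outside: "n < m q \<or> n > l q"
  proof -
    have "n \<noteq> l q" using outside \<open>m q < l q\<close> by auto
    then obtain c where "(1-R)*D q*c > 0" "Fe q n = c * ((n - m q)/(n - l q))"
      using Fext_eq_ratio[OF assms(1,2,4)] by blast
    moreover have "(n - m q)/(n - l q) > 0"
      using outside \<open>m q < l q\<close> by (auto simp: divide_neg_neg)
    ultimately show ?thesis using assms(3) by (metis mult_pos_pos zero_less_mult_pos)
  qed
qed

lemma Fext_sign_ell_m:
  assumes "q > 0" "(1-q)*D q > 0" "(1-R)*D q < 0" "n \<ge> 0"
  shows "l q < m q" "l q < n \<Longrightarrow> n < m q \<Longrightarrow> Fe q n > 0" "n < l q \<or> n > m q \<Longrightarrow> Fe q n < 0"
proof -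
  show "l q < m q"
  proof (rule ccontr)
    assume "\<not> l q < m q"
    then have "(1-R)*D q*(l q - m q) \<le> 0" using assms(3) by (simp add: mult_nonpos_nonneg)
    then show False using ell_minus_m_sign[OF assms(1,2)] by simp
  qed
  have neg: "c < 0" if "(1-R)*D q*c > 0" for c
  proof (rule ccontr)
    assume "\<not> c < 0"
    then have "(1-R)*D q*c \<le> 0" using assms(3) by (simp add: mult_nonpos_nonneg)
    then show False using that by simp
  qed
  show "Fe q n > 0" if between: "l q < n" "n < m q"
  proof -
    have "n \<noteq> l q" using between by simp
    then obtain c where "(1-R)*D q*c > 0" "Fe q n = c * ((n - m q)/(n - l q))"
      using Fext_eq_ratio[OF assms(1,2,4)] by blast
    moreover have "(n - m q)/(n - l q) < 0" using between by (simp add: divide_neg_pos)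
    ultimately show ?thesis using neg by (metis mult_neg_neg)
  qed
  show "Fe q n < 0" if outside: "n < l q \<or> n > m q"
  proof -
    have "n \<noteq> l q" using outside \<open>l q < m q\<close> by auto
    then obtain c where "(1-R)*D q*c > 0" "Fe q n = c * ((n - m q)/(n - l q))"
      using Fext_eq_ratio[OF assms(1,2,4)] by blast
    moreover have "(n - m q)/(n - l q) > 0"
      using outside \<open>l q < m q\<close> by (auto simp: divide_neg_neg)
    ultimately show ?thesis using neg by (metis mult_neg_pos)
  qed
qed

lemma Fext_sign_at_1:
  assumes "n \<ge> 0" "(1-R)*n < (1-R)*l 1"
  shows "n > m 1 \<Longrightarrow> Fe 1 n < 0" "n < m 1 \<Longrightarrow> Fe 1 n > 0"
proof -
  define k where "k = - ((1-R)/(l 1 - n))"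
  have "(1-R)*(l 1 - n) > 0" using assms(2) by (simp add: algebra_simps)
  then have "k < 0" unfolding k_def by (auto simp: zero_less_mult_iff zero_less_divide_iff)
  moreover have "Fe 1 n = (n - m 1) * k" using Fext_at_1(2)[OF assms] unfolding k_def by simp
  ultimately show "n > m 1 \<Longrightarrow> Fe 1 n < 0" "n < m 1 \<Longrightarrow> Fe 1 n > 0"
    by (simp_all add: mult_pos_neg mult_neg_neg)
qed

lemma mfun_ellfun_R_lt_1:
  assumes "R < 1"
  shows "(\<forall>q. 0 < q \<and> q \<le> 1 \<longrightarrow> l q > m q) \<and>
    (\<exists>q0>1. m q0 = l q0 \<and> (\<forall>q. 0 < q \<and> q < q0 \<longrightarrow> m q < l q) \<and> (\<forall>q. q > q0 \<longrightarrow> m q > l q))"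
  using ell_greater_m_le_1 crossing_if_R_lt_1 assms by (auto simp: zero_less_mult_iff)

lemma mfun_ellfun_R_gt_1:
  assumes "R > 1"
  shows "(\<forall>q. 0 < q \<and> q \<le> 1 \<longrightarrow> m q > l q) \<and> (\<forall>q. q > R/(R-1) \<longrightarrow> m q \<noteq> l q)"
proof (intro conjI allI impI)
  fix q :: real assume "0 < q \<and> q \<le> 1"
  then show "m q > l q" using ell_greater_m_le_1[of q] assms by (simp add: mult_less_0_iff zero_less_mult_iff)
next
  fix q :: real assume "q > R/(R-1)"
  then show "m q \<noteq> l q" using mfun_less_ellfun_beyond_pole assms by force
qed

lemma Fext_sign_pattern_R_lt_1:
  assumes "R < 1"
  shows "(\<forall>q n. 0 < q \<and> q < 1 \<and> n \<ge> 0 \<longrightarrow>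
      (m q < n \<and> n < l q \<longrightarrow> Fe q n < 0) \<and> (n < m q \<or> n > l q \<longrightarrow> Fe q n > 0)) \<and>
    (\<forall>n \<ge> 0. (m 1 < n \<and> n < l 1 \<longrightarrow> Fe 1 n < 0) \<and> (n < m 1 \<longrightarrow> Fe 1 n > 0) \<and>
      (n \<ge> l 1 \<longrightarrow> \<not> wd 1 n)) \<and>
    (\<forall>q n. q > 1 \<and> n \<ge> 0 \<longrightarrow> (n > m q \<longrightarrow> Fe q n < 0) \<and> (n < m q \<longrightarrow> Fe q n > 0))"
proof (intro conjI allI impI)
  fix q n :: real assume q: "0 < q \<and> q < 1 \<and> n \<ge> 0"
  then have "(1-q)*D q > 0" "(1-R)*D q > 0" using D_pos assms by simp_all
  note sign = Fext_sign_m_ell[of q n, OF _ this]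
  show "m q < n \<and> n < l q \<Longrightarrow> Fe q n < 0" using sign q by simp
  show "n < m q \<or> n > l q \<Longrightarrow> Fe q n > 0" using sign q by simp
next
  fix n :: real assume "n \<ge> 0"
  have "m 1 < l 1" using ell_greater_m_le_1[of 1] assms by (simp add: zero_less_mult_iff)
  show "m 1 < n \<and> n < l 1 \<Longrightarrow> Fe 1 n < 0" "n < m 1 \<Longrightarrow> Fe 1 n > 0"
    using Fext_sign_at_1[OF \<open>n \<ge> 0\<close>] \<open>m 1 < l 1\<close> assms by auto
  show "n \<ge> l 1 \<Longrightarrow> \<not> wd 1 n" using F_wd_at_1_iff[OF \<open>n \<ge> 0\<close>] assms by simp
next
  fix q n :: real assume "q > 1 \<and> n \<ge> 0"
  then show "n > m q \<Longrightarrow> Fe q n < 0" "n < m q \<Longrightarrow> Fe q n > 0"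
    using Fext_sign_beyond_1 D_pos_if_R_lt_1 assms by (simp_all add: less_imp_le)
qed

lemma Fext_sign_pattern_R_gt_1:
  assumes "R > 1"
  shows "(\<forall>q n. 0 < q \<and> q < 1 \<and> n \<ge> 0 \<longrightarrow>
      (l q < n \<and> n < m q \<longrightarrow> Fe q n > 0) \<and> (n < l q \<or> n > m q \<longrightarrow> Fe q n < 0)) \<and>
    (\<forall>n \<ge> 0. (l 1 < n \<and> n < m 1 \<longrightarrow> Fe 1 n > 0) \<and> (n > m 1 \<longrightarrow> Fe 1 n < 0) \<and>
      (n \<le> l 1 \<longrightarrow> \<not> wd 1 n)) \<and>
    (\<forall>q n. 1 < q \<and> q \<le> R/(R-1) \<and> n \<ge> 0 \<longrightarrow>
      (n > m q \<longrightarrow> Fe q n < 0) \<and> (n < m q \<longrightarrow> Fe q n > 0)) \<and>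
    (\<forall>q n. q > R/(R-1) \<and> n \<ge> 0 \<longrightarrow>
      (m q < n \<and> n < l q \<longrightarrow> Fe q n < 0) \<and> (n > l q \<or> n < m q \<longrightarrow> Fe q n > 0))"
proof (intro conjI allI impI)
  fix q n :: real assume q: "0 < q \<and> q < 1 \<and> n \<ge> 0"
  then have "(1-q)*D q > 0" "(1-R)*D q < 0" using D_pos assms by (simp_all add: mult_neg_pos)
  note sign = Fext_sign_ell_m[of q n, OF _ this]
  show "l q < n \<and> n < m q \<Longrightarrow> Fe q n > 0" using sign q by simp
  show "n < l q \<or> n > m q \<Longrightarrow> Fe q n < 0" using sign q by simp
next
  fix n :: real assume "n \<ge> 0"
  have "l 1 < m 1" using ell_greater_m_le_1[of 1] assms by (simp add: zero_less_mult_iff)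
  show "l 1 < n \<and> n < m 1 \<Longrightarrow> Fe 1 n > 0" "n > m 1 \<Longrightarrow> Fe 1 n < 0"
    using Fext_sign_at_1[OF \<open>n \<ge> 0\<close>] \<open>l 1 < m 1\<close> assms by (auto simp: mult_less_cancel_left)
  show "n \<le> l 1 \<Longrightarrow> \<not> wd 1 n" using F_wd_at_1_iff[OF \<open>n \<ge> 0\<close>] assms
    by (auto simp: mult_less_cancel_left)
next
  fix q n :: real assume "1 < q \<and> q \<le> R/(R-1) \<and> n \<ge> 0"
  moreover then have "D q \<ge> 0" using D_sign_if_R_gt_1[OF assms] by (simp add: not_less[symmetric])
  ultimately show "n > m q \<Longrightarrow> Fe q n < 0" "n < m q \<Longrightarrow> Fe q n > 0"
    using Fext_sign_beyond_1 by simp_all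
next
  fix q n :: real assume q: "q > R/(R-1) \<and> n \<ge> 0"
  then have "q > 1" "D q < 0" using pole_gt_1[OF assms] D_sign_if_R_gt_1(2)[OF assms] by auto
  then have "(1-q)*D q > 0" "(1-R)*D q > 0" using assms by (simp_all add: mult_neg_neg)
  note sign = Fext_sign_m_ell[of q n, OF _ this]
  show "m q < n \<and> n < l q \<Longrightarrow> Fe q n < 0" using sign q \<open>q > 1\<close> by simp
  show "n > l q \<or> n < m q \<Longrightarrow> Fe q n > 0" using sign q \<open>q > 1\<close> by auto
qed

end

theorem lemma5p1:
  fixes R b1 b2 b3 :: real
  assumes hR: "R > 0" "R \<noteq> 1" and hb1: "b1 > 0" and hb2: "b2 > 1" and hb3: "b3 > 0"
  shows
  \<comment> \<open>(1)(a)\<close>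
  "(R < 1 \<longrightarrow>
      (\<forall>q. 0 < q \<and> q \<le> 1 \<longrightarrow> ellfun R b1 b2 b3 q > mfun R b1 b2 b3 q) \<and>
      (\<exists>q0 > 1. mfun R b1 b2 b3 q0 = ellfun R b1 b2 b3 q0 \<and>
         (\<forall>q. 0 < q \<and> q < q0 \<longrightarrow> mfun R b1 b2 b3 q < ellfun R b1 b2 b3 q) \<and>
         (\<forall>q. q > q0 \<longrightarrow> mfun R b1 b2 b3 q > ellfun R b1 b2 b3 q)))
   \<and>
  \<comment> \<open>(1)(b)\<close>
   (R > 1 \<longrightarrow>
      (\<forall>q. 0 < q \<and> q \<le> 1 \<longrightarrow> mfun R b1 b2 b3 q > ellfun R b1 b2 b3 q) \<and>
      (\<forall>q. q > R/(R-1) \<longrightarrow> mfun R b1 b2 b3 q \<noteq> ellfun R b1 b2 b3 q) \<and>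
      ((\<forall>q. 1 < q \<and> q < R/(R-1) \<longrightarrow> mfun R b1 b2 b3 q > ellfun R b1 b2 b3 q) \<or>
       (\<exists>q1. 1 < q1 \<and> q1 < R/(R-1) \<and> mfun R b1 b2 b3 q1 = ellfun R b1 b2 b3 q1 \<and>
          (\<forall>q. 1 < q \<and> q < R/(R-1) \<and> q \<noteq> q1 \<longrightarrow> mfun R b1 b2 b3 q > ellfun R b1 b2 b3 q)) \<or>
       (\<exists>q1 q2. 1 < q1 \<and> q1 < q2 \<and> q2 < R/(R-1) \<and>
          mfun R b1 b2 b3 q1 = ellfun R b1 b2 b3 q1 \<and> mfun R b1 b2 b3 q2 = ellfun R b1 b2 b3 q2 \<and>
          (\<forall>q. 1 < q \<and> q < q1 \<longrightarrow> mfun R b1 b2 b3 q > ellfun R b1 b2 b3 q) \<and>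
          (\<forall>q. q1 < q \<and> q < q2 \<longrightarrow> mfun R b1 b2 b3 q < ellfun R b1 b2 b3 q) \<and>
          (\<forall>q. q2 < q \<and> q < R/(R-1) \<longrightarrow> mfun R b1 b2 b3 q > ellfun R b1 b2 b3 q))))
   \<and>
  \<comment> \<open>(2)\<close>
   (R > 1 \<longrightarrow> (\<forall>n \<ge> 0. F_wd R b1 b2 b3 (R/(R-1)) n))
   \<and>
  \<comment> \<open>(3), first part\<close>
   (\<forall>n > 0. (1-R)*n < (1-R) * ellfun R b1 b2 b3 1 \<longrightarrow>
      F_wd R b1 b2 b3 1 n \<and>
      ((\<lambda>q. Fext R b1 b2 b3 q n) \<longlongrightarrow> Fext R b1 b2 b3 1 n) (at 1) \<and>
      Fext R b1 b2 b3 1 n = - ((1-R) * (n - mfun R b1 b2 b3 1)) / (ellfun R b1 b2 b3 1 - n))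
   \<and>
  \<comment> \<open>(3), second part\<close>
   (R < 1 \<longrightarrow> (\<forall>q. 0 < q \<and> q \<le> 1 \<longrightarrow>
      filterlim (\<lambda>n. Fext R b1 b2 b3 q n) at_bot
        (at (ellfun R b1 b2 b3 q) within {n. 0 < n \<and> n < ellfun R b1 b2 b3 q})))
   \<and>
   (R > 1 \<longrightarrow> (\<forall>q. 0 < q \<and> q \<le> 1 \<longrightarrow>
      filterlim (\<lambda>n. Fext R b1 b2 b3 q n) at_top
        (at (ellfun R b1 b2 b3 q) within {n. 0 < n \<and> ellfun R b1 b2 b3 q < n})))
   \<and>
  \<comment> \<open>(3), third part\<close>
   (\<forall>q. ((R < 1 \<and> q > 1) \<or> (R > 1 \<and> 1 < q \<and> q < R/(R-1))) \<longrightarrow>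
      ((\<lambda>n. Fext R b1 b2 b3 q n) \<longlongrightarrow>
         - ((1-R) / (R*(1-q))) *
           (q*((1-R)*q + R) / (((1-R)*q + R)^2 + (b2-1)*R^2) - 1))
        (at (ellfun R b1 b2 b3 q) within {0<..}))
   \<and>
  \<comment> \<open>(4), zeros\<close>
   (\<forall>q n. F_wd R b1 b2 b3 q n \<longrightarrow> (Fext R b1 b2 b3 q n = 0 \<longleftrightarrow> n = mfun R b1 b2 b3 q))
   \<and>
  \<comment> \<open>(4)(a)\<close>
   (R < 1 \<longrightarrow>
      (\<forall>q n. 0 < q \<and> q < 1 \<and> n \<ge> 0 \<longrightarrow>
         (mfun R b1 b2 b3 q < n \<and> n < ellfun R b1 b2 b3 q \<longrightarrow> Fext R b1 b2 b3 q n < 0) \<and>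
         (n < mfun R b1 b2 b3 q \<or> n > ellfun R b1 b2 b3 q \<longrightarrow> Fext R b1 b2 b3 q n > 0)) \<and>
      (\<forall>n \<ge> 0.
         (mfun R b1 b2 b3 1 < n \<and> n < ellfun R b1 b2 b3 1 \<longrightarrow> Fext R b1 b2 b3 1 n < 0) \<and>
         (n < mfun R b1 b2 b3 1 \<longrightarrow> Fext R b1 b2 b3 1 n > 0) \<and>
         (n \<ge> ellfun R b1 b2 b3 1 \<longrightarrow> \<not> F_wd R b1 b2 b3 1 n)) \<and>
      (\<forall>q n. q > 1 \<and> n \<ge> 0 \<longrightarrow>
         (n > mfun R b1 b2 b3 q \<longrightarrow> Fext R b1 b2 b3 q n < 0) \<and>
         (n < mfun R b1 b2 b3 q \<longrightarrow> Fext R b1 b2 b3 q n > 0)))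
   \<and>
  \<comment> \<open>(4)(b)\<close>
   (R > 1 \<longrightarrow>
      (\<forall>q n. 0 < q \<and> q < 1 \<and> n \<ge> 0 \<longrightarrow>
         (ellfun R b1 b2 b3 q < n \<and> n < mfun R b1 b2 b3 q \<longrightarrow> Fext R b1 b2 b3 q n > 0) \<and>
         (n < ellfun R b1 b2 b3 q \<or> n > mfun R b1 b2 b3 q \<longrightarrow> Fext R b1 b2 b3 q n < 0)) \<and>
      (\<forall>n \<ge> 0.
         (ellfun R b1 b2 b3 1 < n \<and> n < mfun R b1 b2 b3 1 \<longrightarrow> Fext R b1 b2 b3 1 n > 0) \<and>
         (n > mfun R b1 b2 b3 1 \<longrightarrow> Fext R b1 b2 b3 1 n < 0) \<and>
         (n \<le> ellfun R b1 b2 b3 1 \<longrightarrow> \<not> F_wd R b1 b2 b3 1 n)) \<and>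
      (\<forall>q n. 1 < q \<and> q \<le> R/(R-1) \<and> n \<ge> 0 \<longrightarrow>
         (n > mfun R b1 b2 b3 q \<longrightarrow> Fext R b1 b2 b3 q n < 0) \<and>
         (n < mfun R b1 b2 b3 q \<longrightarrow> Fext R b1 b2 b3 q n > 0)) \<and>
      (\<forall>q n. q > R/(R-1) \<and> n \<ge> 0 \<longrightarrow>
         (mfun R b1 b2 b3 q < n \<and> n < ellfun R b1 b2 b3 q \<longrightarrow> Fext R b1 b2 b3 q n < 0) \<and>
         (n > ellfun R b1 b2 b3 q \<or> n < mfun R b1 b2 b3 q \<longrightarrow> Fext R b1 b2 b3 q n > 0)))"
proof -
  interpret F_setting R b1 b2 b3 using hR hb1 hb2 by unfold_locales
  show ?thesis
    apply (intro conjI)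
    subgoal using mfun_ellfun_R_lt_1 by blast
    subgoal using mfun_ellfun_R_gt_1 crossings_if_R_gt_1 by blast
    subgoal using F_wd_at_pole by blast
    subgoal using Fext_at_1 tendsto_Fext_at_1 by (simp add: less_imp_le)
    subgoal using Fext_tendsto_at_bot_below_ell by blast
    subgoal using Fext_tendsto_at_top_above_ell by blast
    subgoal using Fext_tendsto_at_ell D_pos_if_R_lt_1 D_sign_if_R_gt_1(1) by force
    subgoal using Fext_eq_0_iff by blast
    subgoal using Fext_sign_pattern_R_lt_1 by blast
    subgoal using Fext_sign_pattern_R_gt_1 by blast
    done
qed

end
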